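(* Let $k\ge 2$, $s\ge 5$ and let $\mathbf a=(a_1,\dots,a_s)$ be nonzero integers. Then for every prime $p$ the limit $\chi_{p}$ exists, the series $\mathfrak S_{\mathbf a}$ converges, and \[\mathfrak S_{\mathbf a}=\prod_{p} \chi_{p},\] where the product converges absolutely, so that $\mathfrak S_{\mathbf a}>0$ if and only if $\chi_{p}>0$ for all $p$ (and always $\chi_{p}\ge0$, so $\mathfrak S_{\mathbf a}\ge 0$).
   Context: $e(x)=e^{2\pi ix}$, $e_q(x)=e(x/q)$, $\varphi$ is Euler's function. $W(q,r)=\sum_{1\le h\le q,\ (h,q)=1}e_q(rh^k)$, $T_{\mathbf a}(q)=\varphi(q)^{-s}\sum_{1\le r\le q,\ (r,q)=1}\prod_{j=1}^sW(q,a_jr)$, $\mathfrak S_{\mathbf a}=\sum_{q=1}^\infty T_{\mathbf a}(q)$. $M_{\mathbf a}(p^n)$ is the number of $(x_1,\dots,x_s)\in((\mathbb Z/p^n\mathbb Z)^\times)^s$ with $a_1x_1^k+\dots+a_sx_s^k\equiv0\pmod{p^n}$, and $\chi_p=\lim_{n\to\infty}p^n\varphi(p^n)^{-s}M_{\mathbf a}(p^n)$. *)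

theory Defs
  imports "HOL-Analysis.Analysis" "HOL-Number_Theory.Number_Theory" "HOL-Library.FuncSet"
begin

definition e :: "real \<Rightarrow> complex" where
  "e x = exp (2 * of_real pi * \<i> * of_real x)"

definition e_q :: "nat \<Rightarrow> real \<Rightarrow> complex" where
  "e_q q x = e (x / real q)"

definition W :: "nat \<Rightarrow> nat \<Rightarrow> int \<Rightarrow> complex" where
  "W k q r = (\<Sum>h\<in>{h. 1 \<le> h \<and> h \<le> q \<and> coprime h q}. e_q q (of_int (r * int h ^ k)))"

definition T :: "nat \<Rightarrow> nat \<Rightarrow> (nat \<Rightarrow> int) \<Rightarrow> nat \<Rightarrow> complex" where
  "T k s a q = (1 / of_nat (totient q) ^ s) *
     (\<Sum>r\<in>{r. 1 \<le> r \<and> r \<le> q \<and> coprime r q}. \<Prod>j\<in>{1..s}. W k q (a j * int r))"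

definition singular_series :: "nat \<Rightarrow> nat \<Rightarrow> (nat \<Rightarrow> int) \<Rightarrow> complex" where
  "singular_series k s a = (\<Sum>q. T k s a (Suc q))"

text \<open>M_a(m): number of (x_1..x_s) in ((Z/mZ)^*)^s with a_1 x_1^k + ... + a_s x_s^k = 0 mod m;
  residues are represented by 0 <= x_j < m.\<close>
definition M :: "nat \<Rightarrow> nat \<Rightarrow> (nat \<Rightarrow> int) \<Rightarrow> nat \<Rightarrow> nat" where
  "M k s a m = card {x \<in> {1..s} \<rightarrow>\<^sub>E {0..<m}.
      (\<forall>j\<in>{1..s}. coprime (x j) m) \<and> int m dvd (\<Sum>j\<in>{1..s}. a j * int (x j) ^ k)}"

definition chi_seq :: "nat \<Rightarrow> nat \<Rightarrow> (nat \<Rightarrow> int) \<Rightarrow> nat \<Rightarrow> nat \<Rightarrow> real" where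
  "chi_seq k s a p n = real (p ^ n) * (1 / real (totient (p ^ n)) ^ s) * real (M k s a (p ^ n))"

definition chi :: "nat \<Rightarrow> nat \<Rightarrow> (nat \<Rightarrow> int) \<Rightarrow> nat \<Rightarrow> real" where
  "chi k s a p = lim (chi_seq k s a p)"

text \<open>Factor of the Euler product indexed by all naturals: chi_p at primes, 1 elsewhere.\<close>
definition euler_factor :: "nat \<Rightarrow> nat \<Rightarrow> (nat \<Rightarrow> int) \<Rightarrow> nat \<Rightarrow> real" where
  "euler_factor k s a n = (if prime n then chi k s a n else 1)"

end

theory Submission
  imports Defs
begin

text \<open>Orthogonality of the characters \<open>e_q\<close> gives \<open>q M(q) = \<phi>(q)^s * (\<Sum>d | d dvd q. T d)\<close>:
  the local density \<open>q M(q) / \<phi>(q)^s\<close> is the divisor sum of \<open>T\<close>. The Chinese remainder theorem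
  makes the local density, and hence \<open>T\<close>, multiplicative. Linearising \<open>(h + p^m u)^k\<close> modulo \<open>p^t\<close>
  shows that \<open>W(p^t, c)\<close> vanishes for \<open>c\<close> prime to \<open>p\<close> once \<open>t \<ge> 2 v\<^sub>p(k) + 2\<close>. So \<open>T(p^t) = 0\<close>
  for large \<open>t\<close>, the sequence defining \<open>\<chi>\<^sub>p\<close> is eventually constant, and \<open>\<chi>\<^sub>p = \<Sum>\<^sub>i T(p^i)\<close>,
  which equals \<open>1 + T(p)\<close> for all large \<open>p\<close>. The bound \<open>|W(p, c)| \<le> k sqrt p\<close> gives
  \<open>|T(p)| \<le> (2k)^s p^(-3/2)\<close> as \<open>s \<ge> 5\<close>. Hence the Euler product converges absolutely, the partial sums
  of \<open>\<Sum> |T(q)|\<close> are bounded by \<open>\<Prod>\<^sub>p \<Sum>\<^sub>i |T(p^i)|\<close>, and the partial Euler products, being local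
  densities at moduli divisible by every \<open>q \<le> N\<close>, converge to the singular series.\<close>

section \<open>Additive characters\<close>

lemma e_add: "e (x + y) = e x * e y"
  by (simp add: e_def distrib_left exp_add)

lemma e_eq_1_iff: "e x = 1 \<longleftrightarrow> x \<in> \<int>"
proof -
  have "e x = 1 \<longleftrightarrow> (\<exists>n::int. 2 * pi * x = real_of_int (2 * n) * pi)"
    unfolding e_def exp_eq_1 by (simp add: mult.commute mult.left_commute)
  also have "\<dots> \<longleftrightarrow> (\<exists>n::int. x = of_int n)"
    by (auto simp: field_simps)
  also have "\<dots> \<longleftrightarrow> x \<in> \<int>"
    by (auto elim: Ints_cases)
  finally show ?thesis .
qed

lemma e_of_int [simp]: "e (of_int n) = 1"
  by (simp add: e_eq_1_iff)

lemma e_zero [simp]: "e 0 = 1"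
  using e_of_int[of 0] by simp

lemma cnj_e: "cnj (e x) = e (- x)"
  by (simp add: e_def exp_cnj)

lemma e_sum: "e (\<Sum>i\<in>A. f i) = (\<Prod>i\<in>A. e (f i))"
proof (cases "finite A")
  case True
  then show ?thesis
    by (induction A rule: finite_induct) (auto simp: e_add)
qed simp

lemma e_power: "e x ^ n = e (of_nat n * x)"
  by (induction n) (auto simp: e_add[symmetric] algebra_simps)

lemma e_q_add: "e_q q (x + y) = e_q q x * e_q q y"
  by (simp add: e_q_def add_divide_distrib e_add)

lemma e_q_sum: "e_q q (\<Sum>i\<in>A. f i) = (\<Prod>i\<in>A. e_q q (f i))"
  unfolding e_q_def sum_divide_distrib e_sum ..

lemma cnj_e_q: "cnj (e_q q x) = e_q q (- x)"
  by (simp add: e_q_def cnj_e)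

lemma e_q_of_int_eq_1:
  assumes "int q dvd N"
  shows "e_q q (of_int N) = 1"
proof -
  obtain m where "N = int q * m"
    using assms by blast
  then have "of_int N / real q \<in> \<int>"
    by (cases "q = 0") simp_all
  then show ?thesis
    by (simp add: e_q_def e_eq_1_iff)
qed

lemma e_q_of_int_cong:
  assumes "[N = N'] (mod int q)"
  shows "e_q q (of_int N) = e_q q (of_int N')"
proof -
  obtain m where "N = N' + int q * m"
    using assms by (metis cong_iff_lin cong_sym)
  then have "e_q q (of_int N) = e_q q (of_int N') * e_q q (of_int (int q * m))"
    by (simp only: of_int_add e_q_add)
  also have "e_q q (of_int (int q * m)) = 1"
    by (rule e_q_of_int_eq_1) simp
  finally show ?thesis
    by simp
qed

lemma sum_e_q_geometric:
  assumes "q > 0" and "q dvd n"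
  shows "(\<Sum>u<n. e_q q (of_int (int u * N))) = (if int q dvd N then of_nat n else 0)"
proof -
  define z where "z = e_q q (of_int N)"
  have sum_z: "(\<Sum>u<n. e_q q (of_int (int u * N))) = (\<Sum>u<n. z ^ u)"
    by (simp add: z_def e_q_def e_power)
  show ?thesis
  proof (cases "int q dvd N")
    case True
    then show ?thesis
      unfolding sum_z z_def e_q_of_int_eq_1[OF True] by simp
  next
    case False
    have "z \<noteq> 1"
    proof
      assume "z = 1"
      then obtain m where "of_int N / real q = of_int m"
        by (auto simp: z_def e_q_def e_eq_1_iff elim: Ints_cases)
      then have "N = int q * m"
        using \<open>q > 0\<close> by (simp add: field_simps) (metis of_int_eq_iff of_int_mult of_int_of_nat_eq)
      with False show False
        by simp
    qed
    obtain c where "n = q * c"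
      using \<open>q dvd n\<close> by blast
    then have "z ^ n = e_q q (of_int (int n * N))"
      by (simp add: z_def e_q_def e_power)
    also have "\<dots> = 1"
      using \<open>n = q * c\<close> by (intro e_q_of_int_eq_1) simp
    finally show ?thesis
      using False \<open>z \<noteq> 1\<close> unfolding sum_z by (simp add: sum_gp_strict)
  qed
qed

lemma sum_e_q_orthogonality:
  assumes "q > 0"
  shows "(\<Sum>r\<in>{1..q}. e_q q (of_int (int r * N))) = (if int q dvd N then of_nat q else 0)"
proof -
  have "(\<Sum>r\<in>{1..q}. e_q q (of_int (int r * N))) = (\<Sum>u<q. e_q q (of_int (int (Suc u) * N)))"
    by (rule sum.reindex_bij_witness[of _ Suc "\<lambda>r. r - 1"]) auto
  also have "\<dots> = e_q q (of_int N) * (\<Sum>u<q. e_q q (of_int (int u * N)))"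
    by (simp add: sum_distrib_left e_q_add[symmetric] algebra_simps)
  also have "\<dots> = (if int q dvd N then of_nat q else 0)"
    unfolding sum_e_q_geometric[OF assms dvd_refl] by (auto simp: e_q_of_int_eq_1)
  finally show ?thesis .
qed

section \<open>Totatives modulo a divisor\<close>

lemma coprimeI_by_primes:
  fixes a b :: nat
  assumes "\<And>p. prime p \<Longrightarrow> p dvd a \<Longrightarrow> p dvd b \<Longrightarrow> False"
  shows "coprime a b"
proof (rule ccontr)
  assume "\<not> coprime a b"
  then have "gcd a b \<noteq> 1"
    unfolding coprime_iff_gcd_eq_1 .
  then obtain p where "prime p" "p dvd gcd a b"
    using prime_factor_nat by blast
  then have "p dvd a" "p dvd b"
    by simp_all
  with assms \<open>prime p\<close> show False .
qed

lemma coprime_imp_cong_totative: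
  assumes "q > 0" and "coprime x q"
  shows "\<exists>g\<in>totatives q. [g = x] (mod q)"
proof (cases "q = 1")
  case False
  then have "x mod q \<in> totatives q"
    using assms by (auto simp: in_totatives_iff intro!: Nat.gr0I)
  then show ?thesis
    by (intro bexI[of _ "x mod q"]) (simp_all add: cong_def)
qed (auto simp: cong_def)

text \<open>Every unit modulo a divisor \<open>d\<close> of \<open>q\<close> lifts to a unit modulo \<open>q\<close>: add to \<open>x\<close> the multiple
  of \<open>d\<close> by the product of the primes of \<open>q\<close> not dividing \<open>x\<close>.\<close>

lemma exists_totative_cong:
  assumes "d dvd q" and "q > 0" and "coprime x d"
  shows "\<exists>g\<in>totatives q. [g = x] (mod d)"
proof -
  define S where "S = {p\<in>prime_factors q. \<not> p dvd x}"
  define y where "y = x + d * \<Prod>S"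
  have "coprime y q"
  proof (rule coprimeI_by_primes)
    fix p :: nat
    assume p: "prime p" "p dvd y" "p dvd q"
    show False
    proof (cases "p dvd x")
      case True
      then have "\<not> p dvd d"
        using p(1) \<open>coprime x d\<close> by (meson coprime_common_divisor not_prime_unit)
      moreover have "\<not> p dvd \<Prod>S"
        using p(1) True by (auto simp: S_def prime_dvd_prod_iff dest: primes_dvd_imp_eq)
      ultimately show False
        using p True by (simp add: y_def prime_dvd_mult_iff dvd_add_right_iff)
    next
      case False
      then have "p dvd \<Prod>S"
        using p \<open>q > 0\<close> by (intro dvd_prodI) (auto simp: S_def in_prime_factors_iff)
      then show False
        using p(2) False by (simp add: y_def dvd_add_left_iff)
    qed
  qed
  then obtain g where "g \<in> totatives q" "[g = y] (mod q)"
    using coprime_imp_cong_totative[OF \<open>q > 0\<close>] by blast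
  moreover have "[y = x] (mod d)"
    by (simp add: y_def cong_def)
  ultimately show ?thesis
    using \<open>d dvd q\<close> by (meson cong_dvd_modulus_nat cong_trans)
qed

lemma bij_betw_totatives_mult:
  assumes "q > 1" and "coprime g q"
  shows "bij_betw (\<lambda>h. g * h mod q) (totatives q) (totatives q)"
proof -
  have "inj_on (\<lambda>h. g * h mod q) (totatives q)"
    using cong_mult_lcancel_nat[OF assms(2)] assms(1) by (auto simp: inj_on_def cong_def totatives_less)
  moreover have "(\<lambda>h. g * h mod q) ` totatives q \<subseteq> totatives q"
    using assms power_in_totatives[of q "g * h" 1 for h]
    by (auto simp: in_totatives_iff coprime_commute)
  ultimately show ?thesis
    by (simp add: bij_betw_def endo_inj_surj)
qed

text \<open>Multiplication by a unit lifting \<open>y / x\<close> modulo \<open>d\<close> maps the fibre over \<open>x\<close> injectively into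
  the fibre over \<open>y\<close>.\<close>

lemma card_totatives_cong_le:
  assumes "d dvd q" and "q > 0" and "coprime x d" and "coprime y d"
  shows "card {h\<in>totatives q. [h = x] (mod d)} \<le> card {h\<in>totatives q. [h = y] (mod d)}"
proof (cases "q = 1")
  case False
  then have "q > 1"
    using \<open>q > 0\<close> by simp
  obtain x' where x': "[x * x' = 1] (mod d)"
    using cong_solve_coprime_nat[OF \<open>coprime x d\<close>] by auto
  then have "coprime (y * x') d"
    using \<open>coprime y d\<close> by (metis cong_imp_coprime cong_sym coprime_1_left coprime_mult_left_iff)
  then obtain g where g: "g \<in> totatives q" "[g = y * x'] (mod d)"
    using exists_totative_cong[OF assms(1,2)] by blast
  then have "coprime g q"
    by (simp add: in_totatives_iff)
  then have bij: "bij_betw (\<lambda>h. g * h mod q) (totatives q) (totatives q)"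
    by (rule bij_betw_totatives_mult[OF \<open>q > 1\<close>])
  show ?thesis
  proof (rule card_inj_on_le)
    show "inj_on (\<lambda>h. g * h mod q) {h\<in>totatives q. [h = x] (mod d)}"
      using bij_betw_imp_inj_on[OF bij] by (rule inj_on_subset) auto
    show "(\<lambda>h. g * h mod q) ` {h\<in>totatives q. [h = x] (mod d)} \<subseteq> {h\<in>totatives q. [h = y] (mod d)}"
    proof safe
      fix h
      assume h: "h \<in> totatives q" "[h = x] (mod d)"
      then show "g * h mod q \<in> totatives q"
        using bij_betwE[OF bij] by blast
      have "[g * h = y * (x * x')] (mod d)"
        using cong_mult[OF g(2) h(2)] by (simp add: ac_simps)
      also have "[y * (x * x') = y] (mod d)"
        using cong_scalar_left[OF x', of y] by simp
      finally show "[g * h mod q = y] (mod d)"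
        using \<open>d dvd q\<close> by (simp add: cong_def mod_mod_cancel)
    qed
  qed simp
qed (use assms in \<open>auto simp: cong_def\<close>)

lemma inj_on_mod_totatives: "inj_on (\<lambda>x. x mod d) (totatives d)"
proof (cases "d > 1")
  case True
  then show ?thesis
    by (auto simp: inj_on_def totatives_less)
next
  case False
  then have "totatives d \<subseteq> {1}"
    by (auto simp: in_totatives_iff)
  then show ?thesis
    by (rule inj_on_subset[rotated]) simp
qed

lemma sum_totatives_group:
  assumes "d dvd q" and "q > 0"
  shows "(\<Sum>h\<in>totatives q. f h) = (\<Sum>x\<in>totatives d. \<Sum>h | h \<in> totatives q \<and> [h = x] (mod d). f h)"
proof -
  let ?R = "(\<lambda>x. x mod d) ` totatives d"
  have "h mod d \<in> ?R" if "h \<in> totatives q" for h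
  proof -
    have "coprime h d"
      using that coprime_divisors[OF dvd_refl \<open>d dvd q\<close>, of h] by (simp add: in_totatives_iff)
    moreover have "d > 0"
      using assms dvd_pos_nat by blast
    ultimately obtain x where "x \<in> totatives d" "[x = h] (mod d)"
      using coprime_imp_cong_totative by blast
    then show ?thesis
      unfolding cong_def by (metis image_eqI)
  qed
  then have "(\<Sum>h\<in>totatives q. f h) = (\<Sum>r\<in>?R. \<Sum>h | h \<in> totatives q \<and> h mod d = r. f h)"
    by (intro sum.group[symmetric]) auto
  also have "\<dots> = (\<Sum>x\<in>totatives d. \<Sum>h | h \<in> totatives q \<and> [h = x] (mod d). f h)"
    by (subst sum.reindex[OF inj_on_mod_totatives]) (simp add: cong_def)
  finally show ?thesis .
qed

lemma card_totatives_cong: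
  assumes "d dvd q" and "q > 0" and "coprime x d"
  shows "card {h\<in>totatives q. [h = x] (mod d)} = totient q div totient d"
proof -
  define c where "c y = card {h\<in>totatives q. [h = y] (mod d)}" for y
  have c_eq: "c y = c 1" if "coprime y d" for y
    using card_totatives_cong_le[OF assms(1,2), of y 1] card_totatives_cong_le[OF assms(1,2), of 1 y] that
    by (simp add: c_def)
  have "totient q = (\<Sum>h\<in>totatives q. 1)"
    by (simp add: totient_def)
  also have "\<dots> = (\<Sum>y\<in>totatives d. c y)"
    unfolding sum_totatives_group[OF assms(1,2)] by (simp add: c_def)
  also have "\<dots> = (\<Sum>y\<in>totatives d. c 1)"
    by (rule sum.cong[OF refl c_eq]) (simp add: in_totatives_iff)
  also have "\<dots> = totient d * c 1"
    by (simp add: totient_def)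
  finally show ?thesis
    using c_eq[OF \<open>coprime x d\<close>] \<open>d dvd q\<close> \<open>q > 0\<close> by (simp add: c_def dvd_pos_nat)
qed

lemma sum_totatives_periodic:
  fixes f :: "nat \<Rightarrow> 'a::comm_semiring_1"
  assumes "d dvd q" and "q > 0" and periodic: "\<And>h. f (h mod d) = f h"
  shows "(\<Sum>h\<in>totatives q. f h) = of_nat (totient q div totient d) * (\<Sum>h\<in>totatives d. f h)"
proof -
  have "(\<Sum>h | h \<in> totatives q \<and> [h = x] (mod d). f h) = of_nat (totient q div totient d) * f x"
    if "x \<in> totatives d" for x
  proof -
    have fibre_const: "f h = f x" if "[h = x] (mod d)" for h
      by (metis periodic that cong_def)
    have "(\<Sum>h | h \<in> totatives q \<and> [h = x] (mod d). f h)
        = (\<Sum>h | h \<in> totatives q \<and> [h = x] (mod d). f x)"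
      by (rule sum.cong) (auto intro: fibre_const)
    also have "\<dots> = of_nat (card {h\<in>totatives q. [h = x] (mod d)}) * f x"
      by simp
    also have "card {h\<in>totatives q. [h = x] (mod d)} = totient q div totient d"
      using card_totatives_cong[OF assms(1,2)] \<open>x \<in> totatives d\<close> by (simp add: in_totatives_iff)
    finally show ?thesis .
  qed
  then show ?thesis
    by (simp add: sum_totatives_group[OF assms(1,2)] sum_distrib_left)
qed

section \<open>Counting solutions with the sums \<open>W\<close> and \<open>T\<close>\<close>

lemma totatives_eq_set: "{h. 1 \<le> h \<and> h \<le> q \<and> coprime h q} = totatives q"
  by (auto simp: in_totatives_iff)

lemma W_eq_sum_totatives: "W k q c = (\<Sum>h\<in>totatives q. e_q q (of_int (c * int h ^ k)))"
  unfolding W_def totatives_eq_set ..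

lemma T_eq_sum_totatives:
  "T k s a q = (1 / of_nat (totient q) ^ s) * (\<Sum>r\<in>totatives q. \<Prod>j\<in>{1..s}. W k q (a j * int r))"
  unfolding T_def totatives_eq_set ..

lemma W_Suc_0 [simp]: "W k (Suc 0) c = 1"
  by (simp add: W_eq_sum_totatives e_q_def)

lemma T_Suc_0 [simp]: "T k s a (Suc 0) = 1"
  by (simp add: T_eq_sum_totatives)

lemma W_cong:
  assumes "[c = c'] (mod int q)"
  shows "W k q c = W k q c'"
  unfolding W_eq_sum_totatives
  by (intro sum.cong refl e_q_of_int_cong cong_mult assms cong_refl)

lemma W_mult_divisor:
  assumes "d dvd q" and "q > 0"
  shows "W k q (c * int (q div d)) = of_nat (totient q div totient d) * W k d c"
proof -
  obtain e where "q = d * e"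
    using assms(1) by blast
  with assms have "d > 0" "q div d = e"
    by auto
  have "W k q (c * int (q div d)) = (\<Sum>h\<in>totatives q. e_q d (of_int (c * int h ^ k)))"
    unfolding W_eq_sum_totatives
    using \<open>q = d * e\<close> \<open>q div d = e\<close> \<open>q > 0\<close> by (intro sum.cong refl) (simp add: e_q_def field_simps)
  also have "\<dots> = of_nat (totient q div totient d) * (\<Sum>h\<in>totatives d. e_q d (of_int (c * int h ^ k)))"
  proof (rule sum_totatives_periodic[OF assms])
    fix h
    have "[c * int (h mod d) ^ k = c * int h ^ k] (mod int d)"
      by (intro cong_mult cong_pow cong_refl) (simp add: cong_def zmod_int)
    then show "e_q d (of_int (c * int (h mod d) ^ k)) = e_q d (of_int (c * int h ^ k))"
      by (rule e_q_of_int_cong)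
  qed
  finally show ?thesis
    by (simp only: W_eq_sum_totatives)
qed

definition diag_form :: "nat \<Rightarrow> nat \<Rightarrow> (nat \<Rightarrow> int) \<Rightarrow> (nat \<Rightarrow> nat) \<Rightarrow> int" where
  "diag_form k s a x = (\<Sum>j\<in>{1..s}. a j * int (x j) ^ k)"

definition unit_solutions :: "nat \<Rightarrow> nat \<Rightarrow> (nat \<Rightarrow> int) \<Rightarrow> nat \<Rightarrow> (nat \<Rightarrow> nat) set" where
  "unit_solutions k s a q = {x \<in> {1..s} \<rightarrow>\<^sub>E totatives q. int q dvd diag_form k s a x}"

lemma diag_form_cong:
  assumes "\<And>j. j \<in> {1..s} \<Longrightarrow> [x j = y j] (mod q)"
  shows "[diag_form k s a x = diag_form k s a y] (mod int q)"
  unfolding diag_form_def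
  by (intro cong_sum cong_mult cong_refl cong_pow) (use assms in \<open>simp add: cong_int_iff\<close>)

text \<open>\<open>M\<close> takes residues in \<open>0..<q\<close>, while totatives lie in \<open>1..q\<close>; the two descriptions of the
  unit residues differ only for \<open>q = 1\<close>.\<close>

lemma M_eq_card_unit_solutions:
  assumes "q > 0"
  shows "M k s a q = card (unit_solutions k s a q)"
proof (cases "q = 1")
  case True
  then have "unit_solutions k s a q = {1..s} \<rightarrow>\<^sub>E {1}"
    by (auto simp: unit_solutions_def)
  moreover have "{x \<in> {1..s} \<rightarrow>\<^sub>E {0..<q}. (\<forall>j\<in>{1..s}. coprime (x j) q)
      \<and> int q dvd (\<Sum>j\<in>{1..s}. a j * int (x j) ^ k)} = {1..s} \<rightarrow>\<^sub>E {0}"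
    using True by auto
  ultimately show ?thesis
    by (simp add: M_def card_PiE)
next
  case False
  with assms have "totatives q = {x\<in>{0..<q}. coprime x q}"
    by (auto simp: in_totatives_iff totatives_less intro!: Nat.gr0I)
  then show ?thesis
    unfolding M_def unit_solutions_def diag_form_def
    by (auto simp: PiE_iff intro!: arg_cong[where f = card])
qed

lemma sum_prod_W_eq_M:
  assumes "q > 0"
  shows "(\<Sum>r\<in>{1..q}. \<Prod>j\<in>{1..s}. W k q (a j * int r)) = of_nat q * of_nat (M k s a q)"
proof -
  let ?X = "{1..s} \<rightarrow>\<^sub>E totatives q"
  have prod_e_q: "(\<Prod>j\<in>{1..s}. e_q q (of_int (a j * int r * int (x j) ^ k)))
      = e_q q (of_int (int r * diag_form k s a x))" for r x
    unfolding e_q_sum[symmetric] diag_form_def by (simp add: sum_distrib_left algebra_simps)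
  have "(\<Sum>r\<in>{1..q}. \<Prod>j\<in>{1..s}. W k q (a j * int r))
      = (\<Sum>r\<in>{1..q}. \<Sum>x\<in>?X. \<Prod>j\<in>{1..s}. e_q q (of_int (a j * int r * int (x j) ^ k)))"
    unfolding W_eq_sum_totatives by (intro sum.cong refl prod_sum_PiE) auto
  also have "\<dots> = (\<Sum>x\<in>?X. \<Sum>r\<in>{1..q}. e_q q (of_int (int r * diag_form k s a x)))"
    unfolding prod_e_q by (rule sum.swap)
  also have "\<dots> = (\<Sum>x\<in>?X. if int q dvd diag_form k s a x then of_nat q else 0)"
    by (intro sum.cong refl sum_e_q_orthogonality[OF assms])
  also have "\<dots> = (\<Sum>x | x \<in> ?X \<and> int q dvd diag_form k s a x. of_nat q)"
    by (rule sum.inter_filter[symmetric]) (simp add: finite_PiE)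
  also have "\<dots> = of_nat q * of_nat (M k s a q)"
    by (simp add: M_eq_card_unit_solutions[OF assms] unit_solutions_def)
  finally show ?thesis .
qed

lemma sum_prod_W_gcd_eq:
  assumes "g dvd q" and "q > 0"
  shows "(\<Sum>r | r \<in> {0<..q} \<and> gcd r q = g. \<Prod>j\<in>{1..s}. W k q (a j * int r))
    = of_nat (totient q) ^ s * T k s a (q div g)"
proof -
  define d where "d = q div g"
  have "d dvd q" "q div d = g" "d > 0"
    using assms by (auto simp: d_def elim!: dvdE)
  have "(\<Sum>r | r \<in> {0<..q} \<and> gcd r q = g. \<Prod>j\<in>{1..s}. W k q (a j * int r))
      = (\<Sum>r\<in>totatives d. \<Prod>j\<in>{1..s}. W k q (a j * int (r * g)))"
    unfolding d_def by (rule sum.reindex_bij_betw[OF bij_betw_totatives_gcd_eq[OF assms], symmetric])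
  also have "\<dots> = (\<Sum>r\<in>totatives d. \<Prod>j\<in>{1..s}. W k q (a j * int r * int (q div d)))"
    by (simp add: \<open>q div d = g\<close> mult.assoc)
  also have "\<dots> = (\<Sum>r\<in>totatives d. of_nat (totient q div totient d) ^ s * (\<Prod>j\<in>{1..s}. W k d (a j * int r)))"
    by (simp add: W_mult_divisor[OF \<open>d dvd q\<close> \<open>q > 0\<close>] prod.distrib)
  also have "\<dots> = of_nat (totient q div totient d * totient d) ^ s * T k s a d"
    using \<open>d > 0\<close> by (simp add: T_eq_sum_totatives sum_distrib_left power_mult_distrib)
  also have "totient q div totient d * totient d = totient q"
    using totient_dvd[OF \<open>d dvd q\<close>] by simp
  finally show ?thesis
    by (simp add: d_def)
qed

lemma sum_T_divisors:
  assumes "q > 0"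
  shows "of_nat q * of_nat (M k s a q) = of_nat (totient q) ^ s * (\<Sum>d | d dvd q. T k s a d)"
proof -
  have "of_nat q * of_nat (M k s a q) = (\<Sum>r\<in>{0<..q}. \<Prod>j\<in>{1..s}. W k q (a j * int r))"
    using sum_prod_W_eq_M[OF assms] by (simp add: atLeastSucAtMost_greaterThanAtMost[symmetric])
  also have "\<dots> = (\<Sum>g | g dvd q. \<Sum>r | r \<in> {0<..q} \<and> gcd r q = g. \<Prod>j\<in>{1..s}. W k q (a j * int r))"
    using assms by (intro sum.group[symmetric]) auto
  also have "\<dots> = (\<Sum>g | g dvd q. of_nat (totient q) ^ s * T k s a (q div g))"
    by (intro sum.cong refl sum_prod_W_gcd_eq) (use assms in auto)
  also have "\<dots> = of_nat (totient q) ^ s * (\<Sum>g | g dvd q. T k s a (q div g))"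
    by (simp add: sum_distrib_left)
  also have "(\<Sum>g | g dvd q. T k s a (q div g)) = (\<Sum>d | d dvd q. T k s a d)"
    using assms by (intro sum.reindex_bij_witness[of _ "\<lambda>g. q div g" "\<lambda>g. q div g"])
      (auto elim!: dvdE)
  finally show ?thesis .
qed

definition local_density :: "nat \<Rightarrow> nat \<Rightarrow> (nat \<Rightarrow> int) \<Rightarrow> nat \<Rightarrow> real" where
  "local_density k s a q = real q * real (M k s a q) / real (totient q) ^ s"

lemma local_density_eq_sum_T:
  assumes "q > 0"
  shows "complex_of_real (local_density k s a q) = (\<Sum>d | d dvd q. T k s a d)"
  using sum_T_divisors[OF assms, of k s a] assms by (simp add: local_density_def field_simps)

lemma chi_seq_eq_local_density: "chi_seq k s a p n = local_density k s a (p ^ n)"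
  by (simp add: chi_seq_def local_density_def field_simps)

lemma local_density_nonneg: "local_density k s a q \<ge> 0"
  by (simp add: local_density_def)

section \<open>Multiplicativity\<close>

definition multiplicative :: "(nat \<Rightarrow> 'a::comm_monoid_mult) \<Rightarrow> bool" where
  "multiplicative f \<longleftrightarrow> (\<forall>m n. coprime m n \<longrightarrow> m > 0 \<longrightarrow> n > 0 \<longrightarrow> f (m * n) = f m * f n)"

lemma multiplicativeD:
  "multiplicative f \<Longrightarrow> coprime m n \<Longrightarrow> m > 0 \<Longrightarrow> n > 0 \<Longrightarrow> f (m * n) = f m * f n"
  by (simp add: multiplicative_def)

lemma multiplicative_prod_prime_powers:
  fixes f :: "nat \<Rightarrow> 'a::comm_monoid_mult" and \<nu> :: "nat \<Rightarrow> nat"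
  assumes "multiplicative f" and "finite P" and "\<forall>p\<in>P. prime p"
  shows "f (\<Prod>p\<in>P. p ^ \<nu> p) = f 1 * (\<Prod>p\<in>P. f (p ^ \<nu> p))"
  using assms(2,3)
proof (induction P rule: finite_induct)
  case (insert p P)
  have "coprime p q" if "q \<in> P" for q
    using insert that by (intro primes_coprime) auto
  then have "coprime (p ^ \<nu> p) (\<Prod>q\<in>P. q ^ \<nu> q)"
    by (intro prod_coprime_right) simp
  moreover have "(\<Prod>q\<in>P. q ^ \<nu> q) > 0"
    using insert.prems by (intro prod_pos) (auto simp: prime_gt_0_nat)
  ultimately show ?case
    using insert multiplicativeD[OF assms(1)] by (simp add: prime_gt_0_nat mult_ac)
qed simp

lemma bij_betw_mult_divisors:
  fixes m n :: nat
  assumes "coprime m n" and "m > 0"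
  shows "bij_betw (\<lambda>(d1, d2). d1 * d2) ({d. d dvd m} \<times> {d. d dvd n}) {d. d dvd m * n}"
  unfolding bij_betw_def
proof
  show "inj_on (\<lambda>(d1, d2). d1 * d2) ({d. d dvd m} \<times> {d. d dvd n})"
  proof (rule inj_onI, clarify)
    fix d1 d2 d1' d2' :: nat
    assume dvd: "d1 dvd m" "d2 dvd n" "d1' dvd m" "d2' dvd n" and eq: "d1 * d2 = d1' * d2'"
    have "d1 dvd d1'" "d1' dvd d1"
      using eq coprime_divisors[OF dvd(1,4) assms(1)] coprime_divisors[OF dvd(3,2) assms(1)]
      by (metis coprime_dvd_mult_left_iff dvd_triv_left)+
    then have "d1 = d1'"
      by (rule dvd_antisym)
    moreover have "d1 > 0"
      using \<open>m > 0\<close> dvd(1) by (rule dvd_pos_nat)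
    ultimately show "d1 = d1' \<and> d2 = d2'"
      using eq by simp
  qed
  show "(\<lambda>(d1, d2). d1 * d2) ` ({d. d dvd m} \<times> {d. d dvd n}) = {d. d dvd m * n}"
    by (auto intro: mult_dvd_mono dest!: division_decomp)
qed

lemma sum_divisors_mult_coprime:
  fixes f :: "nat \<Rightarrow> 'a::comm_monoid_add"
  assumes "coprime m n" and "m > 0"
  shows "(\<Sum>d | d dvd m * n. f d) = (\<Sum>d1 | d1 dvd m. \<Sum>d2 | d2 dvd n. f (d1 * d2))"
  using sum.reindex_bij_betw[OF bij_betw_mult_divisors[OF assms], of f]
  by (simp add: sum.cartesian_product split_def)

lemma multiplicative_sum_divisors:
  fixes g :: "nat \<Rightarrow> 'a::comm_semiring_1"
  assumes "multiplicative g"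
  shows "multiplicative (\<lambda>n. \<Sum>d | d dvd n. g d)"
  unfolding multiplicative_def
proof (intro allI impI)
  fix m n :: nat
  assume "coprime m n" "m > 0" "n > 0"
  have "g (d1 * d2) = g d1 * g d2" if "d1 dvd m" "d2 dvd n" for d1 d2
    using that \<open>m > 0\<close> \<open>n > 0\<close> coprime_divisors[OF that \<open>coprime m n\<close>]
    by (intro multiplicativeD[OF assms]) (auto intro: dvd_pos_nat)
  then show "(\<Sum>d | d dvd m * n. g d) = (\<Sum>d | d dvd m. g d) * (\<Sum>d | d dvd n. g d)"
    by (simp add: sum_divisors_mult_coprime[OF \<open>coprime m n\<close> \<open>m > 0\<close>] sum_product)
qed

text \<open>Conversely, \<open>g\<close> is recovered from its divisor sums by induction on \<open>m * n\<close>: in the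
  double divisor sum for \<open>F (m * n) - F m * F n = 0\<close> every term except the one for
  \<open>(m, n)\<close> vanishes by the induction hypothesis.\<close>

lemma multiplicative_if_sum_divisors:
  fixes g :: "nat \<Rightarrow> 'a::comm_ring_1"
  assumes "multiplicative (\<lambda>n. \<Sum>d | d dvd n. g d)"
  shows "multiplicative g"
  unfolding multiplicative_def
proof (intro allI impI)
  fix m n :: nat
  assume "coprime m n" "m > 0" "n > 0"
  then show "g (m * n) = g m * g n"
  proof (induction "m * n" arbitrary: m n rule: less_induct)
    case less
    define h where "h = (\<lambda>(d1, d2). g (d1 * d2) - g d1 * g d2)"
    let ?P = "{d. d dvd m} \<times> {d. d dvd n}"
    have "(\<Sum>x\<in>?P. h x) = (\<Sum>d | d dvd m * n. g d) - (\<Sum>d | d dvd m. g d) * (\<Sum>d | d dvd n. g d)"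
      by (simp add: h_def sum.cartesian_product split_def sum_subtractf sum_product
          sum_divisors_mult_coprime[OF less.prems(1,2)])
    also have "\<dots> = 0"
      using multiplicativeD[OF assms less.prems] by simp
    finally have "(\<Sum>x\<in>?P. h x) = 0" .
    moreover have other_terms: "h x = 0" if "x \<in> ?P - {(m, n)}" for x
    proof -
      obtain d1 d2 where "x = (d1, d2)"
        by fastforce
      with that have x: "x = (d1, d2)" "d1 dvd m" "d2 dvd n" "d1 < m \<or> d2 < n"
        using less.prems by (auto dest: dvd_imp_le simp: le_less)
      then have "d1 > 0" "d2 > 0"
        using less.prems by (auto intro: dvd_pos_nat)
      with x have "d1 * d2 < m * n"
        using less.prems by (auto intro: mult_less_le_imp_less mult_le_less_imp_less dvd_imp_le)
      then show ?thesis
        using less.hyps[of d1 d2] coprime_divisors[OF x(2,3) less.prems(1)] \<open>d1 > 0\<close> \<open>d2 > 0\<close>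
        by (simp add: h_def x(1))
    qed
    have "(\<Sum>x\<in>?P. h x) = h (m, n) + (\<Sum>x\<in>?P - {(m, n)}. h x)"
      using less.prems by (intro sum.remove) auto
    then have "(\<Sum>x\<in>?P. h x) = h (m, n)"
      using other_terms by simp
    ultimately show ?case
      by (simp add: h_def)
  qed
qed

lemma bij_betw_PiE_pair:
  assumes "bij_betw f A (B \<times> C)"
  shows "bij_betw (\<lambda>x. (\<lambda>j\<in>S. fst (f (x j)), \<lambda>j\<in>S. snd (f (x j))))
    (S \<rightarrow>\<^sub>E A) ((S \<rightarrow>\<^sub>E B) \<times> (S \<rightarrow>\<^sub>E C))"
proof (rule bij_betwI[where g = "\<lambda>(y, z). \<lambda>j\<in>S. inv_into A f (y j, z j)"])
  have f: "f ` A = B \<times> C" "inj_on f A"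
    using assms by (auto simp: bij_betw_def)
  have "fst (f a) \<in> B" "snd (f a) \<in> C" if "a \<in> A" for a
    using f(1) that by (metis image_eqI mem_Times_iff)+
  then show "(\<lambda>x. (\<lambda>j\<in>S. fst (f (x j)), \<lambda>j\<in>S. snd (f (x j)))) \<in> (S \<rightarrow>\<^sub>E A) \<rightarrow> (S \<rightarrow>\<^sub>E B) \<times> (S \<rightarrow>\<^sub>E C)"
    by (auto simp: PiE_iff)
  show "(\<lambda>(y, z). \<lambda>j\<in>S. inv_into A f (y j, z j)) \<in> (S \<rightarrow>\<^sub>E B) \<times> (S \<rightarrow>\<^sub>E C) \<rightarrow> (S \<rightarrow>\<^sub>E A)"
    using f(1) by (auto simp: PiE_iff intro!: inv_into_into)
  show "(\<lambda>(y, z). \<lambda>j\<in>S. inv_into A f (y j, z j)) (\<lambda>j\<in>S. fst (f (x j)), \<lambda>j\<in>S. snd (f (x j))) = x"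
    if "x \<in> S \<rightarrow>\<^sub>E A" for x
    using that f(2) by (auto simp: PiE_iff extensional_def inv_into_f_f intro!: ext)
  show "(\<lambda>j\<in>S. fst (f ((case yz of (y, z) \<Rightarrow> \<lambda>j\<in>S. inv_into A f (y j, z j)) j)),
         \<lambda>j\<in>S. snd (f ((case yz of (y, z) \<Rightarrow> \<lambda>j\<in>S. inv_into A f (y j, z j)) j))) = yz"
    if "yz \<in> (S \<rightarrow>\<^sub>E B) \<times> (S \<rightarrow>\<^sub>E C)" for yz
    using that f(1) by (auto simp: PiE_iff extensional_def f_inv_into_f intro!: ext)
qed

lemma M_Suc_0 [simp]: "M k s a (Suc 0) = 1"
proof -
  have "unit_solutions k s a 1 = {1..s} \<rightarrow>\<^sub>E {1}"
    by (auto simp: unit_solutions_def)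
  then show ?thesis
    by (simp add: M_eq_card_unit_solutions card_PiE)
qed

lemma M_mult:
  assumes "coprime m n" and "m > 0" and "n > 0"
  shows "M k s a (m * n) = M k s a m * M k s a n"
proof (cases "m = 1 \<or> n = 1")
  case False
  with assms have "m > 1" "n > 1"
    by auto
  define \<Phi> where "\<Phi> = (\<lambda>x :: nat \<Rightarrow> nat. (\<lambda>j\<in>{1..s}. x j mod m, \<lambda>j\<in>{1..s}. x j mod n))"
  have bij: "bij_betw \<Phi> ({1..s} \<rightarrow>\<^sub>E totatives (m * n))
      (({1..s} \<rightarrow>\<^sub>E totatives m) \<times> ({1..s} \<rightarrow>\<^sub>E totatives n))"
    unfolding \<Phi>_def using bij_betw_PiE_pair[OF bij_betw_totatives[OF \<open>m > 1\<close> \<open>n > 1\<close> assms(1)]]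
    by simp
  have cong_m: "[diag_form k s a (fst (\<Phi> x)) = diag_form k s a x] (mod int m)"
    and cong_n: "[diag_form k s a (snd (\<Phi> x)) = diag_form k s a x] (mod int n)" for x
    by (simp_all add: \<Phi>_def) (intro diag_form_cong; simp add: cong_def)+
  have coprime_dvd: "int m dvd N \<and> int n dvd N \<longleftrightarrow> int (m * n) dvd N" for N
    using assms(1) by (auto intro: divides_mult dest: dvd_mult_left dvd_mult_right)
  have "int m dvd diag_form k s a (fst (\<Phi> x)) \<and> int n dvd diag_form k s a (snd (\<Phi> x))
      \<longleftrightarrow> int (m * n) dvd diag_form k s a x" for x
    unfolding cong_dvd_iff[OF cong_m] cong_dvd_iff[OF cong_n] coprime_dvd ..
  then have "bij_betw \<Phi> (unit_solutions k s a (m * n))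
      {y \<in> ({1..s} \<rightarrow>\<^sub>E totatives m) \<times> ({1..s} \<rightarrow>\<^sub>E totatives n).
         int m dvd diag_form k s a (fst y) \<and> int n dvd diag_form k s a (snd y)}"
    unfolding unit_solutions_def by (intro bij_betw_Collect[OF bij])
  also have "{y \<in> ({1..s} \<rightarrow>\<^sub>E totatives m) \<times> ({1..s} \<rightarrow>\<^sub>E totatives n).
         int m dvd diag_form k s a (fst y) \<and> int n dvd diag_form k s a (snd y)}
      = unit_solutions k s a m \<times> unit_solutions k s a n"
    by (auto simp: unit_solutions_def)
  finally show ?thesis
    using assms by (simp add: M_eq_card_unit_solutions bij_betw_same_card card_cartesian_product)
qed auto

lemma multiplicative_local_density: "multiplicative (local_density k s a)"
  unfolding multiplicative_def local_density_def
  by (auto simp: M_mult totient_mult_coprime power_mult_distrib)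

lemma multiplicative_T: "multiplicative (T k s a)"
proof (rule multiplicative_if_sum_divisors)
  show "multiplicative (\<lambda>n. \<Sum>d | d dvd n. T k s a d)"
    using multiplicativeD[OF multiplicative_local_density]
    by (auto simp: multiplicative_def local_density_eq_sum_T[symmetric])
qed

lemma multiplicative_norm_T: "multiplicative (\<lambda>n. norm (T k s a n))"
  using multiplicativeD[OF multiplicative_T] by (simp add: multiplicative_def norm_mult)

section \<open>Vanishing of \<open>T\<close> at high prime powers\<close>

lemma power_add_cong_linear:
  fixes a b :: "'a::comm_ring_1"
  shows "b ^ 2 dvd (a + b) ^ Suc n - a ^ Suc n - of_nat (Suc n) * a ^ n * b"
proof (induction n)
  case (Suc n)
  then obtain X where "(a + b) ^ Suc n - a ^ Suc n - of_nat (Suc n) * a ^ n * b = b ^ 2 * X"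
    by (elim dvdE)
  then have X: "(a + b) ^ Suc n = a ^ Suc n + of_nat (Suc n) * a ^ n * b + b ^ 2 * X"
    by (simp add: algebra_simps)
  have "(a + b) ^ Suc (Suc n) - a ^ Suc (Suc n) - of_nat (Suc (Suc n)) * a ^ Suc n * b
      = b ^ 2 * (of_nat (Suc n) * a ^ n + (a + b) * X)"
    by (simp only: power_Suc[of "a + b" "Suc n"] X) (simp add: algebra_simps power2_eq_square)
  then show ?case
    by simp
qed simp

lemma coprime_prime_right_iff:
  fixes a p :: nat
  assumes "prime p"
  shows "coprime a p \<longleftrightarrow> \<not> p dvd a"
proof
  assume "coprime a p"
  show "\<not> p dvd a"
  proof
    assume "p dvd a"
    with \<open>coprime a p\<close> have "is_unit p"
      by (rule coprime_common_divisor) simp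
    with assms show False
      by (simp add: not_prime_unit)
  qed
next
  assume "\<not> p dvd a"
  then show "coprime a p"
    using prime_imp_coprime[OF assms] by (simp add: coprime_commute)
qed

lemma totatives_prime_power_iff:
  assumes "prime p" and "m > 0"
  shows "h \<in> totatives (p ^ m) \<longleftrightarrow> 0 < h \<and> h \<le> p ^ m \<and> \<not> p dvd h"
  using assms by (simp add: in_totatives_iff coprime_prime_right_iff)

lemma bij_betw_totatives_prime_power_split:
  assumes "prime p" and "m > 0"
  shows "bij_betw (\<lambda>(h, u). h + p ^ m * u) (totatives (p ^ m) \<times> {..<p ^ j}) (totatives (p ^ (m + j)))"
proof (rule bij_betwI[where g = "\<lambda>h. (h mod p ^ m, h div p ^ m)"])
  let ?P = "p ^ m" and ?Q = "p ^ j"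
  have "p dvd ?P" and "?P > 0" and "?Q > 0"
    using assms by (simp_all add: prime_gt_0_nat)
  have tot_m: "h \<in> totatives ?P \<longleftrightarrow> 0 < h \<and> h \<le> ?P \<and> \<not> p dvd h" for h
    using assms by (rule totatives_prime_power_iff)
  have tot_mj: "h \<in> totatives (?P * ?Q) \<longleftrightarrow> 0 < h \<and> h \<le> ?P * ?Q \<and> \<not> p dvd h" for h
    using totatives_prime_power_iff[of p "m + j"] assms by (simp add: power_add)
  have "h + ?P * u \<in> totatives (?P * ?Q)" if "h \<in> totatives ?P" "u < ?Q" for h u
  proof -
    have "h + ?P * u \<le> ?P + ?P * (?Q - 1)"
      using that tot_m by (intro add_mono mult_le_mono) auto
    also have "\<dots> = ?P * ?Q"
      using \<open>?Q > 0\<close> by (cases ?Q) simp_all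
    finally show ?thesis
      using that \<open>p dvd ?P\<close> by (auto simp: tot_m tot_mj dvd_add_left_iff)
  qed
  then show "(\<lambda>(h, u). h + ?P * u) \<in> totatives ?P \<times> {..<?Q} \<rightarrow> totatives (p ^ (m + j))"
    by (auto simp: power_add)
  have "h mod ?P \<in> totatives ?P \<and> h div ?P < ?Q" if "h \<in> totatives (?P * ?Q)" for h
  proof -
    have "\<not> p dvd h mod ?P"
      using that \<open>p dvd ?P\<close> by (auto simp: tot_mj dvd_mod_iff)
    moreover have "h < ?P * ?Q"
      using that \<open>p dvd ?P\<close> by (auto simp: tot_mj le_less)
    ultimately show ?thesis
      using \<open>?P > 0\<close> by (auto simp: tot_m less_imp_le div_less_iff_less_mult mult.commute intro!: Nat.gr0I)
  qed
  then show "(\<lambda>h. (h mod ?P, h div ?P)) \<in> totatives (p ^ (m + j)) \<rightarrow> totatives ?P \<times> {..<?Q}"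
    by (auto simp: power_add)
  show "(case (h mod ?P, h div ?P) of (h, u) \<Rightarrow> h + ?P * u) = h" for h
    by simp
  show "(\<lambda>h. (h mod ?P, h div ?P)) (case x of (h, u) \<Rightarrow> h + ?P * u) = x"
    if x_mem: "x \<in> totatives ?P \<times> {..<?Q}" for x
  proof -
    obtain h u where x: "x = (h, u)" "h \<in> totatives ?P"
      using x_mem by (cases x) auto
    then have "h < ?P"
      using \<open>p dvd ?P\<close> by (auto simp: tot_m le_less)
    then show ?thesis
      using \<open>?P > 0\<close> by (simp add: x)
  qed
qed

lemma e_q_mult_add:
  assumes "q > 0"
  shows "e_q (d * q) (of_int (X + int q * Y)) = e_q (d * q) (of_int X) * e_q d (of_int Y)"
proof -
  have "of_int (int q * Y) / real (d * q) = of_int Y / real d"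
    using assms by (cases "d = 0") (simp_all add: field_simps)
  then show ?thesis
    by (simp add: e_q_def add_divide_distrib e_add)
qed

lemma power_shift_cong:
  fixes c :: int
  assumes "k = p ^ v * k'" and "k > 0" and "v < m"
  shows "[c * int (h + p ^ m * u) ^ k
      = c * int h ^ k + int (p ^ (m + v)) * (int u * (c * int k' * int h ^ (k - 1)))] (mod int (p ^ (m + v + 1)))"
proof -
  let ?b = "int (p ^ m) * int u"
  have "?b ^ 2 dvd (int h + ?b) ^ k - int h ^ k - int k * int h ^ (k - 1) * ?b"
    using power_add_cong_linear[of ?b "int h" "k - 1"] \<open>k > 0\<close> by simp
  moreover have "int (p ^ (m + v + 1)) dvd ?b ^ 2"
  proof -
    have "p ^ (m + v + 1) dvd (p ^ m) ^ 2"
      unfolding power_mult[symmetric] by (rule le_imp_power_dvd) (use \<open>v < m\<close> in simp)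
    then have "int (p ^ (m + v + 1)) dvd int (p ^ m) ^ 2"
      by (metis int_dvd_int_iff of_nat_power)
    then show ?thesis
      unfolding power_mult_distrib by (rule dvd_mult2)
  qed
  ultimately have "[(int h + ?b) ^ k = int h ^ k + int k * int h ^ (k - 1) * ?b] (mod int (p ^ (m + v + 1)))"
    by (metis (no_types, lifting) cong_iff_dvd_diff diff_diff_eq dvd_trans)
  then have "[c * (int h + ?b) ^ k = c * (int h ^ k + int k * int h ^ (k - 1) * ?b)] (mod int (p ^ (m + v + 1)))"
    by (rule cong_scalar_left)
  moreover have "int (h + p ^ m * u) = int h + ?b"
    by simp
  moreover have "int k * int h ^ (k - 1) * ?b = int (p ^ (m + v)) * (int u * int k' * int h ^ (k - 1))"
    using \<open>k = p ^ v * k'\<close> by (simp add: power_add algebra_simps)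
  then have "c * (int h ^ k + int k * int h ^ (k - 1) * ?b)
      = c * int h ^ k + int (p ^ (m + v)) * (int u * (c * int k' * int h ^ (k - 1)))"
    unfolding distrib_left by (simp add: algebra_simps)
  ultimately show ?thesis
    by simp
qed

lemma W_prime_power_split:
  assumes "prime p" and "m > 0"
  shows "W k (p ^ (m + j)) c
    = (\<Sum>h\<in>totatives (p ^ m). \<Sum>u<p ^ j. e_q (p ^ (m + j)) (of_int (c * int (h + p ^ m * u) ^ k)))"
proof -
  have "W k (p ^ (m + j)) c
      = (\<Sum>(h, u)\<in>totatives (p ^ m) \<times> {..<p ^ j}. e_q (p ^ (m + j)) (of_int (c * int (h + p ^ m * u) ^ k)))"
    using sum.reindex_bij_betw[OF bij_betw_totatives_prime_power_split[OF assms],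
        of "\<lambda>h. e_q (p ^ (m + j)) (of_int (c * int h ^ k))"]
    by (simp only: W_eq_sum_totatives split_def)
  then show ?thesis
    by (simp only: sum.cartesian_product)
qed

text \<open>Write \<open>t = m + v + 1\<close> with \<open>v\<close> the \<open>p\<close>-adic valuation of \<open>k\<close>, and the totatives of \<open>p ^ t\<close>
  as \<open>h + p ^ m * u\<close>. Since \<open>v < m\<close>, the phase is linear in \<open>u\<close> with a slope prime to \<open>p\<close>, so the
  sum over \<open>u\<close> is a complete sum of a nontrivial character modulo \<open>p\<close>.\<close>

lemma W_prime_power_eq_0:
  assumes "prime p" and "k > 0" and "2 * multiplicity p k + 2 \<le> t" and "\<not> int p dvd c"
  shows "W k (p ^ t) c = 0"
proof -
  define v where "v = multiplicity p k"
  define m where "m = t - v - 1"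
  have "v < m" and "m > 0" and t: "t = m + v + 1"
    using assms(3) by (auto simp: m_def v_def)
  obtain k' where k': "k = p ^ v * k'" "\<not> p dvd k'"
    using multiplicity_decompose'[of k p] assms(1,2) prime_gt_1_nat[OF assms(1)] by (auto simp: v_def)
  define N where "N h = c * int k' * int h ^ (k - 1)" for h
  have "p ^ t = p * p ^ (m + v)" "p ^ (m + v) > 0"
    using assms(1) by (simp_all add: t prime_gt_0_nat)
  have phase: "e_q (p ^ t) (of_int (c * int (h + p ^ m * u) ^ k))
      = e_q (p ^ t) (of_int (c * int h ^ k)) * e_q p (of_int (int u * N h))" for h u
  proof -
    have "e_q (p ^ t) (of_int (c * int (h + p ^ m * u) ^ k))
        = e_q (p ^ t) (of_int (c * int h ^ k + int (p ^ (m + v)) * (int u * N h)))"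
      unfolding t N_def by (rule e_q_of_int_cong[OF power_shift_cong[OF k'(1) \<open>k > 0\<close> \<open>v < m\<close>]])
    also have "\<dots> = e_q (p ^ t) (of_int (c * int h ^ k)) * e_q p (of_int (int u * N h))"
      unfolding \<open>p ^ t = p * p ^ (m + v)\<close> by (rule e_q_mult_add[OF \<open>p ^ (m + v) > 0\<close>])
    finally show ?thesis .
  qed
  have "W k (p ^ t) c = (\<Sum>h\<in>totatives (p ^ m). \<Sum>u<p ^ (v + 1). e_q (p ^ t) (of_int (c * int (h + p ^ m * u) ^ k)))"
    using W_prime_power_split[OF assms(1) \<open>m > 0\<close>, where j = "v + 1" and k = k and c = c]
    by (simp only: t add.assoc)
  also have "\<dots> = (\<Sum>h\<in>totatives (p ^ m). e_q (p ^ t) (of_int (c * int h ^ k))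
      * (\<Sum>u<p ^ (v + 1). e_q p (of_int (int u * N h))))"
    by (simp only: phase sum_distrib_left)
  also have "\<dots> = 0"
  proof (intro sum.neutral ballI)
    fix h
    assume "h \<in> totatives (p ^ m)"
    then have "\<not> p dvd h"
      using \<open>v < m\<close> assms(1) by (simp add: totatives_prime_power_iff)
    moreover have "prime (int p)"
      using assms(1) by simp
    ultimately have "\<not> int p dvd int h ^ (k - 1)"
      using prime_dvd_power[of "int p" "int h"] by auto
    then have "\<not> int p dvd N h"
      using assms(4) k'(2) \<open>prime (int p)\<close> by (simp add: N_def prime_dvd_mult_iff)
    then have "(\<Sum>u<p ^ (v + 1). e_q p (of_int (int u * N h))) = 0"
      using assms(1) by (subst sum_e_q_geometric) (simp_all add: prime_gt_0_nat)
    then show "e_q (p ^ t) (of_int (c * int h ^ k)) * (\<Sum>u<p ^ (v + 1). e_q p (of_int (int u * N h))) = 0"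
      by simp
  qed
  finally show ?thesis .
qed

lemma T_prime_power_eq_0:
  assumes "prime p" and "k > 0" and "j \<in> {1..s}" and "a j \<noteq> 0"
    and "2 * multiplicity p k + 2 + multiplicity (int p) (a j) \<le> t"
  shows "T k s a (p ^ t) = 0"
proof -
  define w where "w = multiplicity (int p) (a j)"
  have "prime (int p)"
    using assms(1) by simp
  then obtain a' where a': "a j = int p ^ w * a'" "\<not> int p dvd a'"
    using multiplicity_decompose'[of "a j" "int p"] assms(4) prime_gt_1_nat[OF assms(1)] by (auto simp: w_def)
  have "w \<le> t" and "p ^ t = p ^ (t - w) * p ^ w" and "p ^ t > 0"
    using assms(1,5) by (auto simp: w_def prime_gt_0_nat simp flip: power_add)
  have W_0: "W k (p ^ t) (a j * int r) = 0" if "r \<in> totatives (p ^ t)" for r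
  proof -
    have "\<not> p dvd r"
      using that assms(1) \<open>w \<le> t\<close> assms(5) by (simp add: totatives_prime_power_iff)
    then have "\<not> int p dvd a' * int r"
      using a'(2) \<open>prime (int p)\<close> by (simp add: prime_dvd_mult_iff)
    have "a j * int r = a' * int r * int (p ^ t div p ^ (t - w))"
      using \<open>p ^ t = p ^ (t - w) * p ^ w\<close> \<open>p ^ t > 0\<close> by (simp add: a'(1))
    then have "W k (p ^ t) (a j * int r)
        = of_nat (totient (p ^ t) div totient (p ^ (t - w))) * W k (p ^ (t - w)) (a' * int r)"
      using \<open>p ^ t > 0\<close> by (simp only: W_mult_divisor le_imp_power_dvd diff_le_self)
    also have "W k (p ^ (t - w)) (a' * int r) = 0"
      using \<open>\<not> int p dvd a' * int r\<close> assms(5) by (intro W_prime_power_eq_0[OF assms(1,2)]) (simp_all add: w_def)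
    finally show ?thesis
      by simp
  qed
  have "(\<Prod>i\<in>{1..s}. W k (p ^ t) (a i * int r)) = 0" if "r \<in> totatives (p ^ t)" for r
    using W_0[OF that] assms(3) by (intro prod_zero) auto
  then show ?thesis
    by (simp add: T_eq_sum_totatives sum.neutral)
qed

lemma sum_divisors_prime_power:
  fixes p :: nat
  assumes "prime p"
  shows "(\<Sum>d | d dvd p ^ n. f d) = (\<Sum>i\<le>n. f (p ^ i))"
proof -
  have "{d. d dvd p ^ n} = (\<lambda>i. p ^ i) ` {..n}"
    using divides_primepow_nat[OF assms] by auto
  moreover have "inj_on (\<lambda>i. p ^ i) {..n}"
    using prime_gt_1_nat[OF assms] by (auto simp: inj_on_def)
  ultimately show ?thesis
    by (simp add: sum.reindex)
qed

lemma local_density_prime_power: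
  assumes "prime p"
  shows "complex_of_real (local_density k s a (p ^ n)) = (\<Sum>i\<le>n. T k s a (p ^ i))"
  using assms by (simp add: local_density_eq_sum_T sum_divisors_prime_power prime_gt_0_nat)

definition vanishing_level :: "nat \<Rightarrow> (nat \<Rightarrow> int) \<Rightarrow> nat \<Rightarrow> nat" where
  "vanishing_level k a p = 2 * multiplicity p k + 2 + multiplicity (int p) (a 1)"

locale diagonal_form =
  fixes k s :: nat and a :: "nat \<Rightarrow> int"
  assumes k_pos: "k > 0" and s_pos: "s > 0" and a_1: "a 1 \<noteq> 0"
begin

lemma T_prime_power_eq_0_above_level:
  assumes "prime p" and "vanishing_level k a p \<le> t"
  shows "T k s a (p ^ t) = 0"
  by (rule T_prime_power_eq_0[where j = 1]) (use assms k_pos s_pos a_1 in \<open>auto simp: vanishing_level_def\<close>)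

lemma sum_T_prime_powers_stable:
  fixes f :: "complex \<Rightarrow> 'a::comm_monoid_add"
  assumes "prime p" and "vanishing_level k a p \<le> n" and "f 0 = 0"
  shows "(\<Sum>i\<le>n. f (T k s a (p ^ i))) = (\<Sum>i\<le>vanishing_level k a p. f (T k s a (p ^ i)))"
  using assms T_prime_power_eq_0_above_level[OF assms(1)] by (intro sum.mono_neutral_right) auto

lemma local_density_prime_power_stable:
  assumes "prime p" and "vanishing_level k a p \<le> n"
  shows "local_density k s a (p ^ n) = local_density k s a (p ^ vanishing_level k a p)"
proof -
  have "complex_of_real (local_density k s a (p ^ n))
      = complex_of_real (local_density k s a (p ^ vanishing_level k a p))"
    using sum_T_prime_powers_stable[OF assms, of "\<lambda>z. z"] by (simp add: local_density_prime_power[OF assms(1)])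
  then show ?thesis
    by simp
qed

lemma chi_seq_eventually_eq:
  assumes "prime p"
  shows "eventually (\<lambda>n. chi_seq k s a p n = local_density k s a (p ^ vanishing_level k a p)) sequentially"
proof (rule eventually_sequentiallyI)
  fix n
  assume "vanishing_level k a p \<le> n"
  then show "chi_seq k s a p n = local_density k s a (p ^ vanishing_level k a p)"
    unfolding chi_seq_eq_local_density by (rule local_density_prime_power_stable[OF assms])
qed

lemma convergent_chi_seq: "prime p \<Longrightarrow> convergent (chi_seq k s a p)"
  using chi_seq_eventually_eq by (auto intro: convergentI tendsto_eventually)

lemma chi_eq_local_density: "prime p \<Longrightarrow> chi k s a p = local_density k s a (p ^ vanishing_level k a p)"
  unfolding chi_def using chi_seq_eventually_eq by (auto intro: limI tendsto_eventually)

lemma chi_nonneg: "prime p \<Longrightarrow> chi k s a p \<ge> 0"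
  by (simp add: chi_eq_local_density local_density_nonneg)

lemma chi_eq_sum_T:
  "prime p \<Longrightarrow> complex_of_real (chi k s a p) = (\<Sum>i\<le>vanishing_level k a p. T k s a (p ^ i))"
  by (simp add: chi_eq_local_density local_density_prime_power)

end

section \<open>The bound for \<open>W\<close> modulo a prime\<close>

lemma W_mult_coprime_power:
  assumes "coprime g q"
  shows "W k q (c * int g ^ k) = W k q c"
proof (cases "q > 1")
  case True
  have "W k q c = (\<Sum>h\<in>totatives q. e_q q (of_int (c * int (g * h mod q) ^ k)))"
    unfolding W_eq_sum_totatives
    by (rule sum.reindex_bij_betw[OF bij_betw_totatives_mult[OF True assms], symmetric])
  also have "\<dots> = W k q (c * int g ^ k)"
    unfolding W_eq_sum_totatives
  proof (intro sum.cong refl e_q_of_int_cong)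
    fix h
    have "[int (g * h mod q) = int g * int h] (mod int q)"
      by (simp add: cong_def zmod_int)
    then show "[c * int (g * h mod q) ^ k = c * int g ^ k * int h ^ k] (mod int q)"
      by (metis cong_pow cong_scalar_left mult.assoc power_mult_distrib)
  qed
  finally show ?thesis ..
next
  case False
  then consider "q = 0" | "q = 1"
    by linarith
  then show ?thesis
  proof cases
    case 1
    then show ?thesis
      by (simp add: W_eq_sum_totatives)
  next
    case 2
    then show ?thesis
      by simp
  qed
qed

definition kth_power_pairs :: "nat \<Rightarrow> nat \<Rightarrow> (nat \<times> nat) set" where
  "kth_power_pairs k q = {xy \<in> totatives q \<times> totatives q. int q dvd int (fst xy) ^ k - int (snd xy) ^ k}"

lemma sum_norm_W_squared:
  assumes "q > 0"
  shows "(\<Sum>r\<in>{1..q}. norm (W k q (int r)) ^ 2) = real q * real (card (kth_power_pairs k q))"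
    (is "?L = ?R")
proof -
  let ?A = "totatives q \<times> totatives q"
  have W_cnj: "W k q (int r) * cnj (W k q (int r))
      = (\<Sum>(x, y)\<in>?A. e_q q (of_int (int r * (int x ^ k - int y ^ k))))" for r
    by (simp add: W_eq_sum_totatives cnj_e_q sum_product sum.cartesian_product
        e_q_add[symmetric] algebra_simps)
  have "complex_of_real (\<Sum>r\<in>{1..q}. norm (W k q (int r)) ^ 2)
      = (\<Sum>r\<in>{1..q}. \<Sum>(x, y)\<in>?A. e_q q (of_int (int r * (int x ^ k - int y ^ k))))"
    by (simp only: of_real_sum complex_norm_square W_cnj)
  also have "\<dots> = (\<Sum>(x, y)\<in>?A. \<Sum>r\<in>{1..q}. e_q q (of_int (int r * (int x ^ k - int y ^ k))))"
    by (subst sum.swap) (simp only: split_def)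
  also have "\<dots> = (\<Sum>(x, y)\<in>?A. if int q dvd int x ^ k - int y ^ k then of_nat q else 0)"
    by (simp only: split_def sum_e_q_orthogonality[OF assms])
  also have "\<dots> = of_nat q * of_nat (card (kth_power_pairs k q))"
    by (simp add: kth_power_pairs_def split_def sum.If_cases Int_def conj_commute)
  finally have "complex_of_real ?L = complex_of_real ?R"
    by simp
  then show ?thesis
    by (simp only: of_real_eq_iff)
qed

lemma card_kth_roots_le:
  assumes "prime p" and "k > 0"
  shows "card {y \<in> totatives p. int p dvd int x ^ k - int y ^ k} \<le> k"
proof -
  have "{y \<in> totatives p. int p dvd int x ^ k - int y ^ k} \<subseteq> {y\<in>{..<p}. [y ^ k = x ^ k] (mod p)}"
    using prime_gt_1_nat[OF assms(1)]
    by (auto simp: totatives_less cong_iff_dvd_diff dvd_diff_commute simp flip: cong_int_iff)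
  then have "card {y \<in> totatives p. int p dvd int x ^ k - int y ^ k} \<le> card {y\<in>{..<p}. [y ^ k = x ^ k] (mod p)}"
    by (intro card_mono) auto
  also have "\<dots> \<le> k"
    using roots_mod_prime_bound[OF assms] .
  finally show ?thesis .
qed

lemma card_kth_power_pairs_le:
  assumes "prime p" and "k > 0"
  shows "card (kth_power_pairs k p) \<le> (p - 1) * k"
proof -
  have "kth_power_pairs k p = Sigma (totatives p) (\<lambda>x. {y \<in> totatives p. int p dvd int x ^ k - int y ^ k})"
    by (auto simp: kth_power_pairs_def)
  then have "card (kth_power_pairs k p) = (\<Sum>x\<in>totatives p. card {y \<in> totatives p. int p dvd int x ^ k - int y ^ k})"
    by (simp add: card_SigmaI)
  also have "\<dots> \<le> (\<Sum>x\<in>totatives p. k)"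
    by (intro sum_mono card_kth_roots_le assms)
  also have "\<dots> = (p - 1) * k"
    using totient_prime[OF assms(1)] by (simp add: totient_def)
  finally show ?thesis .
qed

lemma card_le_mult_card_image:
  assumes "finite A" and "\<And>y. y \<in> f ` A \<Longrightarrow> card {x\<in>A. f x = y} \<le> k"
  shows "card A \<le> k * card (f ` A)"
proof -
  have "card A = (\<Sum>y\<in>f ` A. card {x\<in>A. f x = y})"
    using sum.group[of A "f ` A" f "\<lambda>_. 1::nat"] assms(1) by simp
  also have "\<dots> \<le> (\<Sum>y\<in>f ` A. k)"
    by (intro sum_mono assms(2))
  finally show ?thesis
    by (simp add: mult.commute)
qed

definition kth_power_residues :: "nat \<Rightarrow> nat \<Rightarrow> int \<Rightarrow> nat set" where
  "kth_power_residues k q c = (\<lambda>t. nat ((c * int t ^ k) mod int q)) ` totatives q"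

lemma W_kth_power_residues:
  assumes "q > 0" and "r \<in> kth_power_residues k q c"
  shows "W k q (int r) = W k q c"
proof -
  obtain t where t: "t \<in> totatives q" "r = nat ((c * int t ^ k) mod int q)"
    using assms(2) by (auto simp: kth_power_residues_def)
  then have "[int r = c * int t ^ k] (mod int q)"
    using assms(1) by (simp add: cong_def)
  then show ?thesis
    using W_mult_coprime_power[of t q k c] t(1) by (simp add: W_cong in_totatives_iff)
qed

lemma kth_power_residues_subset:
  assumes "prime p" and "\<not> int p dvd c"
  shows "kth_power_residues k p c \<subseteq> {1..p}"
proof
  fix r
  assume "r \<in> kth_power_residues k p c"
  then obtain t where t: "t \<in> totatives p" "r = nat ((c * int t ^ k) mod int p)"
    by (auto simp: kth_power_residues_def)
  have "prime (int p)"
    using assms(1) by simp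
  moreover have "\<not> int p dvd int t"
    using t(1) assms(1) totatives_prime_power_iff[of p 1] by simp
  ultimately have "\<not> int p dvd c * int t ^ k"
    using assms(2) prime_dvd_power[of "int p" "int t" k] by (auto simp: prime_dvd_mult_iff)
  then have "(c * int t ^ k) mod int p \<noteq> 0"
    by (simp add: dvd_eq_mod_eq_0)
  moreover have "0 \<le> (c * int t ^ k) mod int p" and "(c * int t ^ k) mod int p < int p"
    using prime_gt_1_nat[OF assms(1)] by simp_all
  ultimately have "0 < int r" and "int r < int p"
    using t(2) by simp_all
  then show "r \<in> {1..p}"
    by simp
qed

lemma card_kth_power_residues_ge:
  assumes "prime p" and "k > 0" and "\<not> int p dvd c"
  shows "p - 1 \<le> k * card (kth_power_residues k p c)"
proof -
  define \<phi> where "\<phi> = (\<lambda>t. nat ((c * int t ^ k) mod int p))"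
  have "prime (int p)"
    using assms(1) by simp
  have fibre: "card {t\<in>totatives p. \<phi> t = \<phi> t0} \<le> k" for t0
  proof -
    have "int p dvd int t0 ^ k - int t ^ k" if "\<phi> t = \<phi> t0" for t
    proof -
      have "int p dvd c * (int t0 ^ k - int t ^ k)"
        using arg_cong[OF that, of int] prime_gt_0_nat[OF assms(1)]
        by (simp add: \<phi>_def mod_eq_dvd_iff dvd_diff_commute algebra_simps)
      then show ?thesis
        using assms(3) \<open>prime (int p)\<close> by (simp add: prime_dvd_mult_iff)
    qed
    then have "card {t\<in>totatives p. \<phi> t = \<phi> t0} \<le> card {t \<in> totatives p. int p dvd int t0 ^ k - int t ^ k}"
      by (intro card_mono) auto
    also have "\<dots> \<le> k"
      using card_kth_roots_le[OF assms(1,2)] .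
    finally show ?thesis .
  qed
  have "card (totatives p) \<le> k * card (\<phi> ` totatives p)"
  proof (rule card_le_mult_card_image)
    fix y
    assume "y \<in> \<phi> ` totatives p"
    then show "card {t\<in>totatives p. \<phi> t = y} \<le> k"
      using fibre by blast
  qed simp
  then show ?thesis
    using totient_prime[OF assms(1)] by (simp add: kth_power_residues_def \<phi>_def totient_def)
qed

text \<open>\<open>W k p\<close> is constant on the at least \<open>(p - 1) / k\<close> residues \<open>c * t ^ k\<close>; comparing with the
  mean square of \<open>W k p\<close> over all residues gives the bound.\<close>

lemma W_prime_bound:
  assumes "prime p" and "k > 0" and "\<not> int p dvd c"
  shows "norm (W k p c) \<le> real k * sqrt (real p)"
proof -
  define R where "R = kth_power_residues k p c"
  define w where "w = norm (W k p c) ^ 2"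
  have "p > 1"
    using assms(1) by (rule prime_gt_1_nat)
  have sum_R: "(\<Sum>r\<in>R. norm (W k p (int r)) ^ 2) = (\<Sum>r\<in>R. w)"
    using \<open>p > 1\<close> by (intro sum.cong) (simp_all add: R_def w_def W_kth_power_residues)
  have "real (p - 1) * w \<le> real k * (real (card R) * w)"
    using card_kth_power_residues_ge[OF assms] by (simp add: R_def w_def mult.assoc[symmetric] mult_right_mono flip: of_nat_mult)
  also have "\<dots> = real k * (\<Sum>r\<in>R. norm (W k p (int r)) ^ 2)"
    by (simp add: sum_R)
  also have "\<dots> \<le> real k * (\<Sum>r\<in>{1..p}. norm (W k p (int r)) ^ 2)"
    using kth_power_residues_subset[OF assms(1,3)] by (intro mult_left_mono sum_mono2) (auto simp: R_def)
  also have "\<dots> = real k * (real p * real (card (kth_power_pairs k p)))"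
    using sum_norm_W_squared[of p k] \<open>p > 1\<close> by simp
  also have "\<dots> \<le> real k * (real p * real ((p - 1) * k))"
    using card_kth_power_pairs_le[OF assms(1,2)] by (intro mult_left_mono) (simp_all only: of_nat_le_iff of_nat_0_le_iff)
  also have "real k * (real p * real ((p - 1) * k)) = real (p - 1) * (real k ^ 2 * real p)"
    by (simp only: of_nat_mult power2_eq_square mult_ac)
  finally have "real (p - 1) * w \<le> real (p - 1) * (real k ^ 2 * real p)" .
  then have "w \<le> (real k * sqrt (real p)) ^ 2"
    using \<open>p > 1\<close> by (simp add: power_mult_distrib)
  then show ?thesis
    unfolding w_def by (rule power2_le_imp_le) simp
qed

lemma norm_T_prime_le:
  assumes "prime p" and "k > 0" and "\<forall>j\<in>{1..s}. \<not> int p dvd a j"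
  shows "norm (T k s a p) \<le> real (p - 1) * (real k * sqrt (real p)) ^ s / real (p - 1) ^ s"
proof -
  have "prime (int p)"
    using assms(1) by simp
  have "norm (\<Prod>j\<in>{1..s}. W k p (a j * int r)) \<le> (real k * sqrt (real p)) ^ s"
    if "r \<in> totatives p" for r
  proof -
    have "\<not> int p dvd int r"
      using that assms(1) totatives_prime_power_iff[of p 1] by simp
    then have "\<not> int p dvd a j * int r" if "j \<in> {1..s}" for j
      using that assms(3) \<open>prime (int p)\<close> by (simp add: prime_dvd_mult_iff)
    then have "(\<Prod>j\<in>{1..s}. norm (W k p (a j * int r))) \<le> (\<Prod>j\<in>{1..s}. real k * sqrt (real p))"
      by (intro prod_mono) (simp add: W_prime_bound[OF assms(1,2)])
    then show ?thesis
      by (simp add: prod_norm)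
  qed
  then have "norm (\<Sum>r\<in>totatives p. \<Prod>j\<in>{1..s}. W k p (a j * int r))
      \<le> (\<Sum>r\<in>totatives p. (real k * sqrt (real p)) ^ s)"
    by (intro order_trans[OF norm_sum sum_mono])
  also have "\<dots> = real (p - 1) * (real k * sqrt (real p)) ^ s"
    using totient_prime[OF assms(1)] by (simp add: totient_def)
  finally have "norm (\<Sum>r\<in>totatives p. \<Prod>j\<in>{1..s}. W k p (a j * int r))
      \<le> real (p - 1) * (real k * sqrt (real p)) ^ s" .
  then show ?thesis
    using totient_prime[OF assms(1)]
    by (simp add: T_eq_sum_totatives norm_mult norm_divide norm_power divide_right_mono)
qed

lemma ratio_bound_le_powr:
  fixes x K :: real
  assumes "x \<ge> 2" and "s \<ge> 5" and "K \<ge> 0"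
  shows "(x - 1) * (K * sqrt x) ^ s / (x - 1) ^ s \<le> (2 * K) ^ s * x powr (-3/2)"
proof -
  have "x > 0" and "x - 1 > 0" and "x / 2 \<le> x - 1"
    using assms(1) by auto
  have "(K * sqrt x) ^ s = K ^ s * x powr (real s / 2)"
    using \<open>x > 0\<close> by (simp add: power_mult_distrib powr_half_sqrt[symmetric] powr_realpow[symmetric] powr_powr)
  moreover have "(x - 1) ^ s = (x - 1) * (x - 1) ^ (s - 1)"
    using assms(2) power_Suc[of "x - 1" "s - 1"] by simp
  ultimately have "(x - 1) * (K * sqrt x) ^ s / (x - 1) ^ s = K ^ s * x powr (real s / 2) / (x - 1) ^ (s - 1)"
    using \<open>x - 1 > 0\<close> by simp
  also have "\<dots> \<le> K ^ s * x powr (real s / 2) / (x / 2) ^ (s - 1)"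
    using \<open>x > 0\<close> \<open>x / 2 \<le> x - 1\<close> assms(3) by (intro divide_left_mono power_mono mult_pos_pos) auto
  also have "\<dots> = 2 ^ (s - 1) * K ^ s * (x powr (real s / 2) / x powr (real (s - 1)))"
    using \<open>x > 0\<close> by (simp add: powr_realpow power_divide field_simps)
  also have "x powr (real s / 2) / x powr (real (s - 1)) = x powr (real s / 2 - real (s - 1))"
    by (simp add: powr_diff)
  also have "2 ^ (s - 1) * K ^ s * x powr (real s / 2 - real (s - 1)) \<le> 2 ^ s * K ^ s * x powr (-3/2)"
  proof (rule mult_mono)
    show "2 ^ (s - 1) * K ^ s \<le> 2 ^ s * K ^ s"
      using assms(3) by (intro mult_right_mono power_increasing) auto
    show "x powr (real s / 2 - real (s - 1)) \<le> x powr (-3/2)"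
      using assms(1,2) by (intro powr_mono) auto
  qed (use assms(3) in auto)
  finally show ?thesis
    by (simp add: power_mult_distrib)
qed

lemma norm_T_prime_le_powr:
  assumes "prime p" and "k > 0" and "s \<ge> 5" and "\<forall>j\<in>{1..s}. \<not> int p dvd a j"
  shows "norm (T k s a p) \<le> (2 * real k) ^ s * real p powr (-3/2)"
proof -
  have "real p \<ge> 2"
    using prime_ge_2_nat[OF assms(1)] by simp
  then have "real (p - 1) * (real k * sqrt (real p)) ^ s / real (p - 1) ^ s \<le> (2 * real k) ^ s * real p powr (-3/2)"
    using ratio_bound_le_powr[of "real p" s "real k"] assms(3) by (simp add: of_nat_diff)
  with norm_T_prime_le[OF assms(1,2,4)] show ?thesis
    by linarith
qed

section \<open>Absolute convergence and the Euler product\<close>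

lemma tendsto_sum_supersets:
  fixes f :: "nat \<Rightarrow> 'a::banach"
  assumes "summable (\<lambda>i. norm (f i))" and "\<And>n. finite (A n)" and "\<And>n. {..<n} \<subseteq> A n"
  shows "(\<lambda>n. \<Sum>i\<in>A n. f i) \<longlonglongrightarrow> suminf f"
proof -
  define tail where "tail n = (\<Sum>i. norm (f (i + n)))" for n
  have tail_bound: "norm ((\<Sum>i\<in>A n. f i) - (\<Sum>i<n. f i)) \<le> tail n" for n
  proof -
    let ?B = "A n - {..<n}"
    have "(\<Sum>i\<in>A n. f i) - (\<Sum>i<n. f i) = (\<Sum>i\<in>?B. f i)"
      using assms(2,3) by (simp add: sum_diff)
    also have "norm \<dots> \<le> (\<Sum>i\<in>?B. norm (f i))"
      by (rule norm_sum)
    also have "\<dots> = (\<Sum>i\<in>?B. norm (f (i - n + n)))"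
      by (intro sum.cong) auto
    also have "\<dots> = (\<Sum>j\<in>(\<lambda>i. i - n) ` ?B. norm (f (j + n)))"
      by (rule sum.reindex[symmetric, unfolded comp_def]) (auto simp: inj_on_def)
    also have "\<dots> \<le> tail n"
      unfolding tail_def using assms(1,2) summable_iff_shift[of "\<lambda>i. norm (f i)" n]
      by (intro sum_le_suminf) auto
    finally show ?thesis .
  qed
  have tail_lim: "tail \<longlonglongrightarrow> 0"
  proof -
    have "tail n = (\<Sum>i. norm (f i)) - (\<Sum>i<n. norm (f i))" for n
      using suminf_split_initial_segment[OF assms(1), of n] unfolding tail_def by linarith
    then have "tail = (\<lambda>n. (\<Sum>i. norm (f i)) - (\<Sum>i<n. norm (f i)))"
      by (simp add: fun_eq_iff)
    moreover have "(\<lambda>n. (\<Sum>i. norm (f i)) - (\<Sum>i<n. norm (f i))) \<longlonglongrightarrow> (\<Sum>i. norm (f i)) - (\<Sum>i. norm (f i))"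
      by (intro tendsto_diff tendsto_const summable_LIMSEQ assms(1))
    ultimately show ?thesis
      by simp
  qed
  have "(\<lambda>n. (\<Sum>i\<in>A n. f i) - (\<Sum>i<n. f i)) \<longlonglongrightarrow> 0"
    by (rule Lim_null_comparison[OF always_eventually tail_lim]) (use tail_bound in blast)
  with summable_LIMSEQ[OF summable_norm_cancel[OF assms(1)]]
  have "(\<lambda>n. (\<Sum>i<n. f i) + ((\<Sum>i\<in>A n. f i) - (\<Sum>i<n. f i))) \<longlonglongrightarrow> suminf f + 0"
    by (rule tendsto_add)
  then show ?thesis
    by simp
qed

lemma prodinf_ge_0:
  fixes f :: "nat \<Rightarrow> real"
  assumes "convergent_prod f" and "\<And>i. f i \<ge> 0"
  shows "prodinf f \<ge> 0"
  using assms by (intro LIMSEQ_le_const[OF convergent_prod_LIMSEQ]) (auto intro: prod_nonneg)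

lemma prodinf_pos_iff:
  fixes f :: "nat \<Rightarrow> real"
  assumes "convergent_prod f" and "\<And>i. f i \<ge> 0"
  shows "prodinf f > 0 \<longleftrightarrow> (\<forall>i. f i > 0)"
proof -
  have "prodinf f \<noteq> 0 \<longleftrightarrow> (\<forall>i. f i \<noteq> 0)"
    using has_prod_eq_0_iff[OF convergent_prod_has_prod[OF assms(1)]] by auto
  moreover have "f i \<noteq> 0 \<longleftrightarrow> f i > 0" for i
    using assms(2)[of i] by linarith
  moreover have "prodinf f \<noteq> 0 \<longleftrightarrow> prodinf f > 0"
    using prodinf_ge_0[OF assms] by linarith
  ultimately show ?thesis
    by simp
qed

locale admissible_diagonal_form =
  fixes k s :: nat and a :: "nat \<Rightarrow> int"
  assumes k_pos: "k > 0" and s_ge_5: "s \<ge> 5" and a_nonzero: "\<forall>j\<in>{1..s}. a j \<noteq> 0"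
begin

sublocale diagonal_form
  using k_pos s_ge_5 a_nonzero by unfold_locales auto

definition height :: nat where
  "height = k + (\<Sum>j\<in>{1..s}. nat \<bar>a j\<bar>)"

lemma large_prime_not_dvd_coefficients:
  assumes "height < p" and "j \<in> {1..s}"
  shows "\<not> int p dvd a j"
proof -
  have "nat \<bar>a j\<bar> \<le> (\<Sum>j\<in>{1..s}. nat \<bar>a j\<bar>)"
    using assms(2) by (intro member_le_sum) auto
  then have "\<bar>a j\<bar> < int p"
    using assms(1) by (simp add: height_def)
  show ?thesis
  proof
    assume "int p dvd a j"
    then have "int p \<le> \<bar>a j\<bar>"
      using dvd_imp_le_int[of "a j" "int p"] a_nonzero assms(2) by simp
    with \<open>\<bar>a j\<bar> < int p\<close> show False
      by simp
  qed
qed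

lemma vanishing_level_large_prime:
  assumes "height < p"
  shows "vanishing_level k a p = 2"
proof -
  have "\<not> p dvd k"
    using assms k_pos by (auto simp: height_def dest: dvd_imp_le)
  moreover have "\<not> int p dvd a 1"
    using large_prime_not_dvd_coefficients[OF assms] s_ge_5 by simp
  ultimately show ?thesis
    by (simp add: vanishing_level_def not_dvd_imp_multiplicity_0)
qed

lemma chi_large_prime:
  assumes "prime p" and "height < p"
  shows "complex_of_real (chi k s a p) = 1 + T k s a p"
proof -
  have "T k s a (p ^ 2) = 0"
    using T_prime_power_eq_0_above_level[OF assms(1)] vanishing_level_large_prime[OF assms(2)] by simp
  moreover have "{..2::nat} = {0, 1, 2}"
    by auto
  ultimately show ?thesis
    using chi_eq_sum_T[OF assms(1)] vanishing_level_large_prime[OF assms(2)] by simp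
qed

lemma norm_T_large_prime:
  assumes "prime p" and "height < p"
  shows "norm (T k s a p) \<le> (2 * real k) ^ s * real p powr (-3/2)"
  using norm_T_prime_le_powr[OF assms(1) k_pos s_ge_5] large_prime_not_dvd_coefficients[OF assms(2)]
  by blast

lemma summable_norm_euler_factor_minus_1: "summable (\<lambda>n. norm (euler_factor k s a n - 1))"
proof (rule summable_comparison_test')
  show "summable (\<lambda>n. (2 * real k) ^ s * real n powr (-3/2))"
    by (intro summable_mult) (simp add: summable_real_powr_iff)
  show "norm (norm (euler_factor k s a n - 1)) \<le> (2 * real k) ^ s * real n powr (-3/2)"
    if "Suc height \<le> n" for n
  proof (cases "prime n")
    case True
    then have "\<bar>chi k s a n - 1\<bar> = norm (T k s a n)"
      using chi_large_prime[of n] that by (metis Suc_le_lessD add_diff_cancel_left' norm_of_real of_real_1 of_real_diff)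
    then show ?thesis
      using norm_T_large_prime[OF True] that by (simp add: euler_factor_def)
  qed (simp add: euler_factor_def)
qed

definition local_norm_sum :: "nat \<Rightarrow> real" where
  "local_norm_sum p = (\<Sum>i\<le>vanishing_level k a p. norm (T k s a (p ^ i)))"

lemma local_norm_sum_ge_1: "local_norm_sum p \<ge> 1"
proof -
  have "norm (T k s a (p ^ 0)) \<le> local_norm_sum p"
    unfolding local_norm_sum_def by (rule member_le_sum) auto
  then show ?thesis
    by simp
qed

lemma local_norm_sum_large_prime:
  assumes "prime p" and "height < p"
  shows "local_norm_sum p \<le> exp ((2 * real k) ^ s * real p powr (-3/2))"
proof -
  have "{..2::nat} = {0, 1, 2}"
    by auto
  then have "local_norm_sum p = 1 + norm (T k s a p)"
    using T_prime_power_eq_0_above_level[OF assms(1), of 2] vanishing_level_large_prime[OF assms(2)]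
    by (simp add: local_norm_sum_def)
  also have "\<dots> \<le> 1 + (2 * real k) ^ s * real p powr (-3/2)"
    using norm_T_large_prime[OF assms] by simp
  also have "\<dots> \<le> exp ((2 * real k) ^ s * real p powr (-3/2))"
    by (rule exp_ge_add_one_self)
  finally show ?thesis .
qed

text \<open>The summand \<open>N\<close> in the exponents makes every \<open>q \<le> N\<close> a divisor; exceeding the vanishing level
  makes the local density the product of the \<open>\<chi>\<^sub>p\<close>.\<close>

definition smooth_modulus :: "nat \<Rightarrow> nat" where
  "smooth_modulus N = (\<Prod>p | prime p \<and> p \<le> N. p ^ (vanishing_level k a p + N))"

lemma smooth_modulus_pos: "smooth_modulus N > 0"
  unfolding smooth_modulus_def by (intro prod_pos) (auto simp: prime_gt_0_nat)

lemma dvd_smooth_modulus: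
  assumes "q \<in> {1..N}"
  shows "q dvd smooth_modulus N"
proof -
  have "multiplicity p q \<le> N" if "prime p" for p
  proof -
    have "q < p ^ q"
      using prime_ge_2_nat[OF that] by (metis less_exp order.strict_trans2 power_mono zero_le)
    then have "\<not> p ^ q dvd q"
      using assms by (auto dest: dvd_imp_le)
    then have "multiplicity p q < q"
      using multiplicity_lessI[of q p q] assms prime_gt_1_nat[OF that] by simp
    then show ?thesis
      using assms by simp
  qed
  moreover have "p \<le> N" if "p \<in> prime_factors q" for p
    using that assms dvd_imp_le[of p q] by (auto simp: in_prime_factors_iff)
  ultimately have "(\<Prod>p\<in>prime_factors q. p ^ multiplicity p q) dvd smooth_modulus N"
    unfolding smooth_modulus_def
    by (intro prod_dvd_prod_subset2 le_imp_power_dvd) (auto simp: in_prime_factors_iff intro: trans_le_add2)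
  then show ?thesis
    using prod_prime_factors[of q] assms by simp
qed

lemma sum_norm_T_smooth_modulus:
  "(\<Sum>d | d dvd smooth_modulus N. norm (T k s a d)) = (\<Prod>p | prime p \<and> p \<le> N. local_norm_sum p)"
proof -
  have "(\<Sum>d | d dvd smooth_modulus N. norm (T k s a d))
      = (\<Prod>p | prime p \<and> p \<le> N. \<Sum>d | d dvd p ^ (vanishing_level k a p + N). norm (T k s a d))"
    unfolding smooth_modulus_def
    by (subst multiplicative_prod_prime_powers[OF multiplicative_sum_divisors[OF multiplicative_norm_T]])
      simp_all
  also have "\<dots> = (\<Prod>p | prime p \<and> p \<le> N. local_norm_sum p)"
    using sum_T_prime_powers_stable[of _ "vanishing_level k a _ + N" norm]
    by (intro prod.cong refl) (simp add: sum_divisors_prime_power local_norm_sum_def)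
  finally show ?thesis .
qed

lemma local_density_smooth_modulus:
  "local_density k s a (smooth_modulus N) = (\<Prod>p | prime p \<and> p \<le> N. chi k s a p)"
proof -
  have "local_density k s a (smooth_modulus N)
      = (\<Prod>p | prime p \<and> p \<le> N. local_density k s a (p ^ (vanishing_level k a p + N)))"
    unfolding smooth_modulus_def
    by (subst multiplicative_prod_prime_powers[OF multiplicative_local_density])
      (simp_all add: local_density_def)
  also have "\<dots> = (\<Prod>p | prime p \<and> p \<le> N. chi k s a p)"
  proof (intro prod.cong refl)
    fix p
    assume "p \<in> {p. prime p \<and> p \<le> N}"
    then show "local_density k s a (p ^ (vanishing_level k a p + N)) = chi k s a p"
      using local_density_prime_power_stable[of p "vanishing_level k a p + N"] chi_eq_local_density[of p]
      by simp
  qed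
  finally show ?thesis .
qed

lemma prod_local_norm_sum_le:
  "(\<Prod>p | prime p \<and> p \<le> N. local_norm_sum p)
    \<le> (\<Prod>p | prime p \<and> p \<le> height. local_norm_sum p) * exp ((2 * real k) ^ s * (\<Sum>n. real n powr (-3/2)))"
proof -
  let ?C = "(2 * real k) ^ s"
  let ?small = "{p. prime p \<and> p \<le> N \<and> p \<le> height}" and ?large = "{p. prime p \<and> p \<le> N \<and> height < p}"
  have "finite ?small" "finite ?large"
    by (auto intro: finite_subset[of _ "{..N}"])
  have "{p. prime p \<and> p \<le> N} = ?small \<union> ?large"
    by auto
  then have "(\<Prod>p | prime p \<and> p \<le> N. local_norm_sum p)
      = (\<Prod>p\<in>?small. local_norm_sum p) * (\<Prod>p\<in>?large. local_norm_sum p)"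
    using \<open>finite ?small\<close> \<open>finite ?large\<close> by (simp add: prod.union_disjoint disjoint_iff)
  also have "\<dots> \<le> (\<Prod>p | prime p \<and> p \<le> height. local_norm_sum p) * exp (?C * (\<Sum>n. real n powr (-3/2)))"
  proof (rule mult_mono)
    show "(\<Prod>p\<in>?small. local_norm_sum p) \<le> (\<Prod>p | prime p \<and> p \<le> height. local_norm_sum p)"
      using local_norm_sum_ge_1 by (intro prod_mono2) (auto intro: order_trans[OF zero_le_one])
    have "(\<Prod>p\<in>?large. local_norm_sum p) \<le> (\<Prod>p\<in>?large. exp (?C * real p powr (-3/2)))"
      using local_norm_sum_ge_1 local_norm_sum_large_prime
      by (intro prod_mono) (auto intro: order_trans[OF zero_le_one])
    also have "\<dots> = exp (?C * (\<Sum>p\<in>?large. real p powr (-3/2)))"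
      using \<open>finite ?large\<close> by (simp add: exp_sum sum_distrib_left)
    also have "\<dots> \<le> exp (?C * (\<Sum>n. real n powr (-3/2)))"
      using \<open>finite ?large\<close>
      by (intro exp_mono mult_left_mono sum_le_suminf) (simp_all add: summable_real_powr_iff)
    finally show "(\<Prod>p\<in>?large. local_norm_sum p) \<le> exp (?C * (\<Sum>n. real n powr (-3/2)))" .
  qed (use local_norm_sum_ge_1 in \<open>auto intro: prod_nonneg order_trans[OF zero_le_one]\<close>)
  finally show ?thesis .
qed

lemma summable_norm_T: "summable (\<lambda>q. norm (T k s a (Suc q)))"
proof (rule bounded_imp_summable)
  fix n
  have "(\<Sum>q\<le>n. norm (T k s a (Suc q))) = (\<Sum>q\<in>{1..Suc n}. norm (T k s a q))"
    by (rule sum.reindex_bij_witness[of _ "\<lambda>q. q - 1" Suc]) auto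
  also have "\<dots> \<le> (\<Sum>d | d dvd smooth_modulus (Suc n). norm (T k s a d))"
    using smooth_modulus_pos dvd_smooth_modulus by (intro sum_mono2) auto
  also have "\<dots> \<le> (\<Prod>p | prime p \<and> p \<le> height. local_norm_sum p) * exp ((2 * real k) ^ s * (\<Sum>n. real n powr (-3/2)))"
    unfolding sum_norm_T_smooth_modulus by (rule prod_local_norm_sum_le)
  finally show "(\<Sum>q\<le>n. norm (T k s a (Suc q)))
      \<le> (\<Prod>p | prime p \<and> p \<le> height. local_norm_sum p) * exp ((2 * real k) ^ s * (\<Sum>n. real n powr (-3/2)))" .
qed simp

lemma tendsto_prod_chi:
  "(\<lambda>n. complex_of_real (\<Prod>p | prime p \<and> p \<le> n. chi k s a p)) \<longlonglongrightarrow> singular_series k s a"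
proof -
  have "(\<lambda>n. \<Sum>q | Suc q dvd smooth_modulus n. T k s a (Suc q)) \<longlonglongrightarrow> singular_series k s a"
    unfolding singular_series_def
  proof (rule tendsto_sum_supersets[OF summable_norm_T])
    show "finite {q. Suc q dvd smooth_modulus n}" for n
    proof (rule finite_subset[of _ "{..<smooth_modulus n}"])
      show "{q. Suc q dvd smooth_modulus n} \<subseteq> {..<smooth_modulus n}"
      proof
        fix q
        assume "q \<in> {q. Suc q dvd smooth_modulus n}"
        then have "Suc q \<le> smooth_modulus n"
          by (intro dvd_imp_le smooth_modulus_pos) simp
        then show "q \<in> {..<smooth_modulus n}"
          by simp
      qed
    qed simp
    show "{..<n} \<subseteq> {q. Suc q dvd smooth_modulus n}" for n
      by (auto intro: dvd_smooth_modulus)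
  qed
  moreover have "(\<Sum>q | Suc q dvd smooth_modulus n. T k s a (Suc q))
      = complex_of_real (\<Prod>p | prime p \<and> p \<le> n. chi k s a p)" for n
  proof -
    have "(\<Sum>q | Suc q dvd smooth_modulus n. T k s a (Suc q)) = (\<Sum>d | d dvd smooth_modulus n. T k s a d)"
      using smooth_modulus_pos[of n]
      by (intro sum.reindex_bij_witness[of _ "\<lambda>d. d - 1" Suc]) (auto dest: dvd_pos_nat)
    then show ?thesis
      by (simp add: local_density_eq_sum_T[OF smooth_modulus_pos, symmetric] local_density_smooth_modulus)
  qed
  ultimately show ?thesis
    by simp
qed

lemma prod_euler_factor: "(\<Prod>i\<le>n. euler_factor k s a i) = (\<Prod>p | prime p \<and> p \<le> n. chi k s a p)"
  unfolding euler_factor_def by (subst prod.inter_filter[symmetric]) (auto intro: prod.cong)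

end

theorem lemma2p1:
  fixes k s :: nat and a :: "nat \<Rightarrow> int"
  assumes "k \<ge> 2" and "s \<ge> 5" and "\<forall>j\<in>{1..s}. a j \<noteq> 0"
  shows "(\<forall>p. prime p \<longrightarrow> convergent (chi_seq k s a p))
    \<and> summable (\<lambda>q. T k s a (Suc q))
    \<and> convergent_prod (euler_factor k s a)
    \<and> abs_convergent_prod (euler_factor k s a)
    \<and> singular_series k s a = complex_of_real (prodinf (euler_factor k s a))
    \<and> (\<forall>p. prime p \<longrightarrow> chi k s a p \<ge> 0)
    \<and> (Re (singular_series k s a) > 0 \<longleftrightarrow> (\<forall>p. prime p \<longrightarrow> chi k s a p > 0))
    \<and> Re (singular_series k s a) \<ge> 0"
proof -
  interpret admissible_diagonal_form k s a
    using assms by unfold_locales auto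
  have abs_conv: "abs_convergent_prod (euler_factor k s a)"
    by (rule summable_imp_abs_convergent_prod[OF summable_norm_euler_factor_minus_1])
  then have conv: "convergent_prod (euler_factor k s a)"
    by (rule abs_convergent_prod_imp_convergent_prod)
  have factor_nonneg: "euler_factor k s a i \<ge> 0" for i
    by (simp add: euler_factor_def chi_nonneg)
  have "(\<lambda>n. complex_of_real (\<Prod>i\<le>n. euler_factor k s a i)) \<longlonglongrightarrow> complex_of_real (prodinf (euler_factor k s a))"
    by (intro tendsto_of_real convergent_prod_LIMSEQ conv)
  then have series_eq: "singular_series k s a = complex_of_real (prodinf (euler_factor k s a))"
    using tendsto_prod_chi unfolding prod_euler_factor by (rule LIMSEQ_unique[rotated])
  have "(\<forall>i. euler_factor k s a i > 0) \<longleftrightarrow> (\<forall>p. prime p \<longrightarrow> chi k s a p > 0)"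
    by (metis euler_factor_def zero_less_one)
  then have "prodinf (euler_factor k s a) > 0 \<longleftrightarrow> (\<forall>p. prime p \<longrightarrow> chi k s a p > 0)"
    using prodinf_pos_iff[OF conv factor_nonneg] by simp
  then show ?thesis
    using convergent_chi_seq chi_nonneg summable_norm_cancel[OF summable_norm_T] abs_conv conv
      series_eq prodinf_ge_0[OF conv factor_nonneg] by simp
qed

end
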